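(* Let $(M,\mathbf{p})$ be a projective manifold. If at some point $x\in M$ the map $\Psi_x:T_xM\to\Lambda^2T_x^*M\otimes T_xM$, $\xi^a\mapsto W_{ab}{}^c{}_d\xi^d$, has trivial kernel, then $\mathbf{p}$ is not induced by (i.e. does not contain) the Levi-Civita connection of a Sasaki structure on $M$.
   Context: A projective structure $\mathbf{p}$ is an equivalence class of torsion-free affine connections with the same unparametrised geodesics. For $\nabla\in\mathbf{p}$ (on $M$ of dimension $n+1$), with curvature $R_{ab}{}^c{}_d$ ($R_{ab}{}^c{}_d\xi^d=(\nabla_a\nabla_b-\nabla_b\nabla_a)\xi^c$), Ricci tensor $\mathrm{Ric}_{bd}=R_{cb}{}^c{}_d$ and $\mathsf{P}_{ab}=\frac{1}{n(n+2)}[(n+1)\mathrm{Ric}_{ab}+\mathrm{Ric}_{ba}]$, the projective Weyl curvature $W$ is defined by $R_{ab}{}^c{}_d=W_{ab}{}^c{}_d+2\delta^c{}_{[a}\mathsf{P}_{b]d}-2\mathsf{P}_{[ab]}\delta^c{}_d$; it depends only on $\mathbf{p}$. A Sasaki structure is a pseudo-Riemannian metric $g$ with Levi-Civita connection $\nabla$ and a Killing field $k$ of $g$ with $g_{ab}k^ak^b=1$ and $\nabla_a\nabla_bk^c=-g_{ab}k^c+\delta^c{}_ak_b$. *)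

theory Defs
  imports "HOL-Analysis.Analysis"
begin

text \<open>Local coordinate setting: an open set U of real^'n (dimension n+1 = CARD('n)).
  Tensor fields are given by their components in the standard coordinates.\<close>

definition pd :: "'n::finite \<Rightarrow> (real^'n \<Rightarrow> real) \<Rightarrow> real^'n \<Rightarrow> real" where
  "pd i f x = frechet_derivative f (at x) (axis i 1)"

fun iterpd :: "'n::finite list \<Rightarrow> (real^'n \<Rightarrow> real) \<Rightarrow> real^'n \<Rightarrow> real" where
  "iterpd [] f = f"
| "iterpd (i # is) f = pd i (iterpd is f)"

definition smooth_fun :: "(real^'n::finite) set \<Rightarrow> (real^'n \<Rightarrow> real) \<Rightarrow> bool" where
  "smooth_fun U f \<longleftrightarrow> (\<forall>is. \<forall>x\<in>U. iterpd is f differentiable (at x))"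

text \<open>A connection with Christoffel symbols: G x a b c = Gamma^c_ab at x,
  so that nabla_a xi^c = d_a xi^c + Gamma^c_ab xi^b.\<close>
type_synonym 'n christoffel = "real^'n \<Rightarrow> 'n \<Rightarrow> 'n \<Rightarrow> 'n \<Rightarrow> real"

definition torsion_free_conn :: "(real^'n::finite) set \<Rightarrow> 'n christoffel \<Rightarrow> bool" where
  "torsion_free_conn U G \<longleftrightarrow>
     (\<forall>a b c. smooth_fun U (\<lambda>y. G y a b c)) \<and> (\<forall>x\<in>U. \<forall>a b c. G x a b c = G x b a c)"

text \<open>Curvature R_ab^c_d, with R_ab^c_d xi^d = (nabla_a nabla_b - nabla_b nabla_a) xi^c
  (written out for a torsion-free connection).\<close>
definition curv :: "'n::finite christoffel \<Rightarrow> real^'n \<Rightarrow> 'n \<Rightarrow> 'n \<Rightarrow> 'n \<Rightarrow> 'n \<Rightarrow> real" where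
  "curv G x a b c d =
     pd a (\<lambda>y. G y b d c) x - pd b (\<lambda>y. G y a d c) x
     + (\<Sum>e\<in>UNIV. G x a e c * G x b d e) - (\<Sum>e\<in>UNIV. G x b e c * G x a d e)"

definition ricci :: "'n::finite christoffel \<Rightarrow> real^'n \<Rightarrow> 'n \<Rightarrow> 'n \<Rightarrow> real" where
  "ricci G x b d = (\<Sum>c\<in>UNIV. curv G x c b c d)"

definition schouten :: "'n::finite christoffel \<Rightarrow> real^'n \<Rightarrow> 'n \<Rightarrow> 'n \<Rightarrow> real" where
  "schouten G x a b =
     (let n = real CARD('n) - 1 in ((n + 1) * ricci G x a b + ricci G x b a) / (n * (n + 2)))"

definition kdelta :: "'n \<Rightarrow> 'n \<Rightarrow> real" where
  "kdelta i j = (if i = j then 1 else 0)"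

text \<open>Projective Weyl curvature W_ab^c_d, defined by
  R_ab^c_d = W_ab^c_d + 2 delta^c_[a P_b]d - 2 P_[ab] delta^c_d.\<close>
definition proj_weyl :: "'n::finite christoffel \<Rightarrow> real^'n \<Rightarrow> 'n \<Rightarrow> 'n \<Rightarrow> 'n \<Rightarrow> 'n \<Rightarrow> real" where
  "proj_weyl G x a b c d =
     curv G x a b c d
     - (kdelta c a * schouten G x b d - kdelta c b * schouten G x a d)
     + (schouten G x a b - schouten G x b a) * kdelta c d"

definition pregeodesic :: "(real^'n::finite) set \<Rightarrow> 'n christoffel \<Rightarrow> real set \<Rightarrow> (real \<Rightarrow> real^'n) \<Rightarrow> bool" where
  "pregeodesic U G I \<gamma> \<longleftrightarrow>
     (\<exists>\<gamma>' \<gamma>'' f. \<forall>t\<in>I. \<gamma> t \<in> U \<and>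
        (\<gamma> has_vector_derivative \<gamma>' t) (at t) \<and>
        (\<gamma>' has_vector_derivative \<gamma>'' t) (at t) \<and>
        \<gamma>' t \<noteq> 0 \<and>
        (\<forall>c. \<gamma>'' t $ c + (\<Sum>a\<in>UNIV. \<Sum>b\<in>UNIV. G (\<gamma> t) a b c * \<gamma>' t $ a * \<gamma>' t $ b)
              = f t * \<gamma>' t $ c))"

text \<open>Two connections define the same projective structure iff they have the same
  unparametrised geodesics.\<close>
definition proj_equiv :: "(real^'n::finite) set \<Rightarrow> 'n christoffel \<Rightarrow> 'n christoffel \<Rightarrow> bool" where
  "proj_equiv U G G' \<longleftrightarrow>
     (\<forall>s t \<gamma>. s < t \<longrightarrow> (pregeodesic U G {s<..<t} \<gamma> \<longleftrightarrow> pregeodesic U G' {s<..<t} \<gamma>))"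

definition pseudo_metric :: "(real^'n::finite) set \<Rightarrow> (real^'n \<Rightarrow> 'n \<Rightarrow> 'n \<Rightarrow> real) \<Rightarrow> bool" where
  "pseudo_metric U g \<longleftrightarrow>
     (\<forall>a b. smooth_fun U (\<lambda>y. g y a b)) \<and>
     (\<forall>x\<in>U. (\<forall>a b. g x a b = g x b a) \<and> det (\<chi> i j. g x i j) \<noteq> 0)"

definition levi_civita :: "(real^'n::finite) set \<Rightarrow> (real^'n \<Rightarrow> 'n \<Rightarrow> 'n \<Rightarrow> real) \<Rightarrow> 'n christoffel \<Rightarrow> bool" where
  "levi_civita U g G \<longleftrightarrow>
     (\<forall>x\<in>U. \<forall>a b c. G x a b c = G x b a c) \<and>
     (\<forall>x\<in>U. \<forall>a b c. pd a (\<lambda>y. g y b c) x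
        - (\<Sum>d\<in>UNIV. G x a b d * g x d c) - (\<Sum>d\<in>UNIV. G x a c d * g x b d) = 0)"

definition cov_vec :: "'n::finite christoffel \<Rightarrow> (real^'n \<Rightarrow> real^'n) \<Rightarrow> real^'n \<Rightarrow> 'n \<Rightarrow> 'n \<Rightarrow> real" where
  "cov_vec G k x a c = pd a (\<lambda>y. k y $ c) x + (\<Sum>d\<in>UNIV. G x a d c * k x $ d)"

definition cov2_vec :: "'n::finite christoffel \<Rightarrow> (real^'n \<Rightarrow> real^'n) \<Rightarrow> real^'n \<Rightarrow> 'n \<Rightarrow> 'n \<Rightarrow> 'n \<Rightarrow> real" where
  "cov2_vec G k x a b c =
     pd a (\<lambda>y. cov_vec G k y b c) x
     + (\<Sum>e\<in>UNIV. G x a e c * cov_vec G k x b e)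
     - (\<Sum>e\<in>UNIV. G x a b e * cov_vec G k x e c)"

definition sasaki :: "(real^'n::finite) set \<Rightarrow> (real^'n \<Rightarrow> 'n \<Rightarrow> 'n \<Rightarrow> real) \<Rightarrow> (real^'n \<Rightarrow> real^'n)
                      \<Rightarrow> 'n christoffel \<Rightarrow> bool" where
  "sasaki U g k G \<longleftrightarrow>
     pseudo_metric U g \<and> levi_civita U g G \<and>
     (\<forall>c. smooth_fun U (\<lambda>y. k y $ c)) \<and>
     (\<forall>x\<in>U.
        \<comment> \<open>Killing: nabla_a k_b + nabla_b k_a = 0\<close>
        (\<forall>a b. (\<Sum>c\<in>UNIV. g x b c * cov_vec G k x a c + g x a c * cov_vec G k x b c) = 0) \<and>
        (\<Sum>a\<in>UNIV. \<Sum>b\<in>UNIV. g x a b * k x $ a * k x $ b) = 1 \<and>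
        (\<forall>a b c. cov2_vec G k x a b c =
            - g x a b * k x $ c + kdelta c a * (\<Sum>d\<in>UNIV. g x b d * k x $ d)))"

end

theory Submission
  imports Defs
begin

text \<open>Suppose \<open>\<nabla> \<in> \<^bold>p\<close> is the Levi-Civita connection of a Sasaki structure \<open>(g, k)\<close>.
  Since \<open>W\<close> depends only on \<open>\<^bold>p\<close>, it may be computed from \<open>\<nabla>\<close>. Commuting the derivatives in
  \<open>\<nabla>\<^sub>a\<nabla>\<^sub>b k\<^sup>c = -g\<^sub>a\<^sub>b k\<^sup>c + \<delta>\<^sup>c\<^sub>a k\<^sub>b\<close> gives \<open>R\<^sub>a\<^sub>b\<^sup>c\<^sub>d k\<^sup>d = \<delta>\<^sup>c\<^sub>a k\<^sub>b - \<delta>\<^sup>c\<^sub>b k\<^sub>a\<close>; as the Ricci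
  tensor of a Levi-Civita connection is symmetric, this yields \<open>P\<^sub>b\<^sub>d k\<^sup>d = k\<^sub>b\<close> and hence
  \<open>W\<^sub>a\<^sub>b\<^sup>c\<^sub>d k\<^sup>d = 0\<close>, although \<open>g(k, k) = 1\<close> forces \<open>k \<noteq> 0\<close>.

  That \<open>W\<close> is a projective invariant is proved from the geodesics: following the geodesic of \<open>\<nabla>\<close>
  with initial velocity \<open>v\<close>, which exists by the Picard-Lindeloef theorem, shows that
  \<open>(\<nabla>' - \<nabla>)(v, v)\<close> is parallel to \<open>v\<close> for all \<open>v\<close>. This forces
  \<open>\<nabla>' = \<nabla> + \<delta> \<otimes> \<Upsilon> + \<Upsilon> \<otimes> \<delta>\<close>, and \<open>W\<close> is unchanged by such a change of connection.\<close>

section \<open>Calculus of coordinate partial derivatives\<close>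

lemma pd_eq: "(f has_derivative D) (at x) \<Longrightarrow> pd i f x = D (axis i 1)"
  unfolding pd_def using frechet_derivative_at by metis

lemma has_derivative_frechet_derivative:
  "f differentiable (at x) \<Longrightarrow> (f has_derivative frechet_derivative f (at x)) (at x)"
  using frechet_derivative_works by blast

lemma pd_transform_within_open:
  assumes "open S" "x \<in> S" "\<And>y. y \<in> S \<Longrightarrow> f y = g y"
  shows "pd i f x = pd i g x"
proof -
  have "(f has_derivative D) (at x) = (g has_derivative D) (at x)" for D
    using assms has_derivative_transform_within_open[of f _ x UNIV S g]
      has_derivative_transform_within_open[of g _ x UNIV S f] by auto
  then show ?thesis unfolding pd_def frechet_derivative_def by simp
qed

lemma differentiable_transform_within_open:
  assumes "open S" "x \<in> S" "\<And>y. y \<in> S \<Longrightarrow> f y = g y" "g differentiable (at x)"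
  shows "f differentiable (at x)"
  using assms has_derivative_transform_within_open[of g _ x UNIV S f] unfolding differentiable_def
  by auto

lemma pd_add: "f differentiable (at x) \<Longrightarrow> g differentiable (at x) \<Longrightarrow>
    pd i (\<lambda>y. f y + g y) x = pd i f x + pd i g x"
  using pd_eq[OF has_derivative_add[OF has_derivative_frechet_derivative has_derivative_frechet_derivative]]
  by (simp add: pd_def)

lemma pd_mult: "f differentiable (at x) \<Longrightarrow> g differentiable (at x) \<Longrightarrow>
    pd i (\<lambda>y. f y * g y) x = f x * pd i g x + pd i f x * g x"
  using pd_eq[OF has_derivative_mult[OF has_derivative_frechet_derivative has_derivative_frechet_derivative]]
  by (simp add: pd_def)

lemma pd_const: "pd i (\<lambda>y. c) x = 0"
  by (rule pd_eq) (auto intro!: has_derivative_const)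

lemma pd_cmult: "f differentiable (at x) \<Longrightarrow> pd i (\<lambda>y. c * f y) x = c * pd i f x"
  using pd_mult[of "\<lambda>y. c" x f i] by (simp add: pd_const)

lemma pd_sum:
  assumes "finite A" "\<And>a. a \<in> A \<Longrightarrow> f a differentiable (at x)"
  shows "pd i (\<lambda>y. \<Sum>a\<in>A. f a y) x = (\<Sum>a\<in>A. pd i (f a) x)"
proof -
  have "((\<lambda>y. \<Sum>a\<in>A. f a y) has_derivative (\<lambda>h. \<Sum>a\<in>A. frechet_derivative (f a) (at x) h)) (at x)"
    by (rule has_derivative_sum) (use assms has_derivative_frechet_derivative in auto)
  from pd_eq[OF this] show ?thesis by (simp add: pd_def)
qed

lemma has_real_derivative_pd_line:
  assumes "f differentiable (at (p + s *\<^sub>R axis i 1))"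
  shows "((\<lambda>t. f (p + t *\<^sub>R axis i 1)) has_real_derivative pd i f (p + s *\<^sub>R axis i 1)) (at s)"
proof -
  define D where "D = frechet_derivative f (at (p + s *\<^sub>R axis i 1))"
  have fD: "(f has_derivative D) (at (p + s *\<^sub>R axis i 1))"
    using has_derivative_frechet_derivative[OF assms] D_def by simp
  have "((\<lambda>t. p + t *\<^sub>R axis i 1) has_derivative (\<lambda>t. t *\<^sub>R axis i 1)) (at s)"
    by (auto intro!: derivative_eq_intros)
  from has_derivative_compose[OF this fD]
  have "((\<lambda>t. f (p + t *\<^sub>R axis i 1)) has_derivative (\<lambda>t. t * D (axis i 1))) (at s)"
    using linear_scale[OF has_derivative_linear[OF fD]] by simp
  then show ?thesis
    unfolding has_field_derivative_def D_def pd_def by (rule has_derivative_eq_rhs) (auto simp: mult.commute)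
qed

lemma iterpd_snoc: "iterpd (is @ [i]) f = iterpd is (pd i f)"
  by (induction "is") auto

lemma smooth_fun_differentiable: "smooth_fun U f \<Longrightarrow> x \<in> U \<Longrightarrow> f differentiable (at x)"
  unfolding smooth_fun_def by (metis iterpd.simps(1))

lemma smooth_fun_pd: "smooth_fun U f \<Longrightarrow> smooth_fun U (pd i f)"
  unfolding smooth_fun_def by (metis iterpd_snoc)

lemma smooth_fun_continuous: "smooth_fun U f \<Longrightarrow> x \<in> U \<Longrightarrow> continuous (at x) f"
  using smooth_fun_differentiable differentiable_imp_continuous_within by blast

section \<open>Symmetry of second partial derivatives\<close>

lemma MVT_centered:
  fixes \<phi> :: "real \<Rightarrow> real"
  assumes "h \<noteq> 0" "\<And>s. \<bar>s\<bar> \<le> \<bar>h\<bar> \<Longrightarrow> DERIV \<phi> s :> \<phi>' s"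
  shows "\<exists>\<xi>. \<bar>\<xi>\<bar> \<le> \<bar>h\<bar> \<and> \<phi> h - \<phi> 0 = h * \<phi>' \<xi>"
proof (cases "h > 0")
  case True
  then obtain z where "0 < z" "z < h" "\<phi> h - \<phi> 0 = (h - 0) * \<phi>' z"
    using MVT2[of 0 h \<phi> \<phi>'] assms(2) by force
  then show ?thesis by (intro exI[of _ z]) auto
next
  case False
  then obtain z where "h < z" "z < 0" "\<phi> 0 - \<phi> h = (0 - h) * \<phi>' z"
    using MVT2[of h 0 \<phi> \<phi>'] assms by force
  then show ?thesis by (intro exI[of _ z]) (auto simp: algebra_simps)
qed

lemma second_difference_MVT:
  fixes f :: "real^'n::finite \<Rightarrow> real" and a b :: 'n
  defines "ea \<equiv> axis a 1 :: real^'n" and "eb \<equiv> axis b 1 :: real^'n"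
  assumes f: "smooth_fun U f" and ball: "ball x \<rho> \<subseteq> U" and h: "h \<noteq> 0" "2 * \<bar>h\<bar> < \<rho>"
  shows "\<exists>\<xi>. \<bar>\<xi>\<bar> \<le> \<bar>h\<bar> \<and> f (x + h *\<^sub>R eb + h *\<^sub>R ea) - f (x + h *\<^sub>R ea) - f (x + h *\<^sub>R eb) + f x
                = h * (pd a f (x + h *\<^sub>R eb + \<xi> *\<^sub>R ea) - pd a f (x + \<xi> *\<^sub>R ea))"
proof -
  define \<phi> where "\<phi> s = f (x + h *\<^sub>R eb + s *\<^sub>R ea) - f (x + s *\<^sub>R ea)" for s
  have "DERIV \<phi> s :> pd a f (x + h *\<^sub>R eb + s *\<^sub>R ea) - pd a f (x + s *\<^sub>R ea)" if s: "\<bar>s\<bar> \<le> \<bar>h\<bar>" for s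
  proof -
    have "norm (h *\<^sub>R eb + s *\<^sub>R ea) \<le> 2 * \<bar>h\<bar>"
      using norm_triangle_ineq[of "h *\<^sub>R eb" "s *\<^sub>R ea"] s by (simp add: ea_def eb_def)
    moreover have "dist x (x + h *\<^sub>R eb + s *\<^sub>R ea) = norm (h *\<^sub>R eb + s *\<^sub>R ea)"
      by (metis add.assoc add_diff_cancel_left' dist_commute dist_norm)
    ultimately have "x + h *\<^sub>R eb + s *\<^sub>R ea \<in> U"
      using h ball by auto
    moreover have "x + s *\<^sub>R ea \<in> U"
      using h s ball by (auto simp: dist_norm ea_def intro!: subsetD[OF ball])
    ultimately show ?thesis
      unfolding \<phi>_def ea_def
      by (intro DERIV_diff has_real_derivative_pd_line smooth_fun_differentiable[OF f])
  qed
  from MVT_centered[OF h(1) this] show ?thesis unfolding \<phi>_def by (simp add: algebra_simps)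
qed

lemma second_difference_derivative_estimate:
  fixes q :: "real^'n::finite \<Rightarrow> real" and a b :: 'n
  defines "ea \<equiv> axis a 1 :: real^'n" and "eb \<equiv> axis b 1 :: real^'n"
  assumes q: "(q has_derivative Dq) (at x)" and r: "r > 0"
  shows "\<exists>d>0. \<forall>h s. 2 * \<bar>h\<bar> < d \<and> \<bar>s\<bar> \<le> \<bar>h\<bar> \<longrightarrow>
           \<bar>q (x + h *\<^sub>R eb + s *\<^sub>R ea) - q (x + s *\<^sub>R ea) - h * Dq eb\<bar> \<le> r * \<bar>h\<bar>"
proof -
  have lin: "linear Dq" using q has_derivative_linear by blast
  obtain d where d: "d > 0" "\<And>y. norm (y - x) < d \<Longrightarrow> norm (q y - q x - Dq (y - x)) \<le> r / 3 * norm (y - x)"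
    using q[unfolded has_derivative_at_alt] r by (metis zero_less_divide_iff zero_less_numeral)
  have "\<bar>q (x + h *\<^sub>R eb + s *\<^sub>R ea) - q (x + s *\<^sub>R ea) - h * Dq eb\<bar> \<le> r * \<bar>h\<bar>"
    if h: "2 * \<bar>h\<bar> < d" and s: "\<bar>s\<bar> \<le> \<bar>h\<bar>" for h s
  proof -
    define P1 where "P1 = x + h *\<^sub>R eb + s *\<^sub>R ea"
    define P2 where "P2 = x + s *\<^sub>R ea"
    have n1: "norm (P1 - x) \<le> 2 * \<bar>h\<bar>"
      using norm_triangle_ineq[of "h *\<^sub>R eb" "s *\<^sub>R ea"] s by (simp add: P1_def ea_def eb_def)
    have n2: "norm (P2 - x) \<le> \<bar>h\<bar>" using s by (simp add: P2_def ea_def)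
    have e1: "\<bar>q P1 - q x - Dq (P1 - x)\<bar> \<le> r / 3 * (2 * \<bar>h\<bar>)"
      using d(2)[of P1] n1 h r by (smt (verit) mult_left_mono real_norm_def zero_le_divide_iff)
    have e2: "\<bar>q P2 - q x - Dq (P2 - x)\<bar> \<le> r / 3 * \<bar>h\<bar>"
      using d(2)[of P2] n2 h r by (smt (verit) mult_left_mono real_norm_def zero_le_divide_iff)
    have "Dq (P1 - x) - Dq (P2 - x) = h * Dq eb"
      by (simp add: P1_def P2_def linear_add[OF lin] linear_scale[OF lin])
    then show ?thesis using e1 e2 unfolding P1_def P2_def by linarith
  qed
  then show ?thesis using d(1) by blast
qed

lemma second_difference_tendsto_pd:
  fixes f :: "real^'n::finite \<Rightarrow> real"
  assumes U: "open U" "x \<in> U" and f: "smooth_fun U f"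
  shows "((\<lambda>h. (f (x + h *\<^sub>R axis b 1 + h *\<^sub>R axis a 1) - f (x + h *\<^sub>R axis a 1)
            - f (x + h *\<^sub>R axis b 1) + f x) / h\<^sup>2) \<longlongrightarrow> pd b (pd a f) x) (at 0)"
proof (unfold LIM_eq, intro allI impI)
  fix r :: real assume r: "r > 0"
  obtain \<rho> where \<rho>: "\<rho> > 0" "ball x \<rho> \<subseteq> U" using U open_contains_ball by blast
  define Dq where "Dq = frechet_derivative (pd a f) (at x)"
  have Dq: "(pd a f has_derivative Dq) (at x)"
    unfolding Dq_def by (intro has_derivative_frechet_derivative smooth_fun_differentiable[OF smooth_fun_pd[OF f] U(2)])
  obtain d where d: "d > 0" "\<And>h s. 2 * \<bar>h\<bar> < d \<Longrightarrow> \<bar>s\<bar> \<le> \<bar>h\<bar> \<Longrightarrow>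
      \<bar>pd a f (x + h *\<^sub>R axis b 1 + s *\<^sub>R axis a 1) - pd a f (x + s *\<^sub>R axis a 1) - h * Dq (axis b 1)\<bar> \<le> r / 2 * \<bar>h\<bar>"
    using second_difference_derivative_estimate[OF Dq, where r = "r / 2" and a = a and b = b] r
    by (meson half_gt_zero)
  have "\<bar>(f (x + h *\<^sub>R axis b 1 + h *\<^sub>R axis a 1) - f (x + h *\<^sub>R axis a 1) - f (x + h *\<^sub>R axis b 1) + f x) / h\<^sup>2
          - pd b (pd a f) x\<bar> < r"
    if h: "h \<noteq> 0" "\<bar>h\<bar> < min d \<rho> / 2" for h
  proof -
    obtain \<xi> where \<xi>: "\<bar>\<xi>\<bar> \<le> \<bar>h\<bar>"
      "f (x + h *\<^sub>R axis b 1 + h *\<^sub>R axis a 1) - f (x + h *\<^sub>R axis a 1) - f (x + h *\<^sub>R axis b 1) + f x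
         = h * (pd a f (x + h *\<^sub>R axis b 1 + \<xi> *\<^sub>R axis a 1) - pd a f (x + \<xi> *\<^sub>R axis a 1))"
      using second_difference_MVT[OF f \<rho>(2) h(1)] h by fastforce
    have "pd b (pd a f) x = Dq (axis b 1)" using pd_eq[OF Dq] .
    moreover have "h * X / h\<^sup>2 - Y = (X - h * Y) / h" for X Y
      using h by (simp add: power2_eq_square field_simps)
    moreover have "0 < r * \<bar>h\<bar>" using h r by simp
    ultimately show ?thesis
      using d(2)[of h \<xi>] \<xi> h by (simp add: abs_divide divide_less_eq)
  qed
  then show "\<exists>s>0. \<forall>h. h \<noteq> 0 \<and> norm (h - 0) < s \<longrightarrow>
      norm ((f (x + h *\<^sub>R axis b 1 + h *\<^sub>R axis a 1) - f (x + h *\<^sub>R axis a 1)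
            - f (x + h *\<^sub>R axis b 1) + f x) / h\<^sup>2 - pd b (pd a f) x) < r"
    using d(1) \<rho>(1) by (intro exI[of _ "min d \<rho> / 2"]) auto
qed

theorem pd_commute:
  fixes f :: "real^'n::finite \<Rightarrow> real"
  assumes "open U" "x \<in> U" "smooth_fun U f"
  shows "pd a (pd b f) x = pd b (pd a f) x"
proof (rule tendsto_unique[OF at_neq_bot])
  show "((\<lambda>h. (f (x + h *\<^sub>R axis a 1 + h *\<^sub>R axis b 1) - f (x + h *\<^sub>R axis b 1)
            - f (x + h *\<^sub>R axis a 1) + f x) / h\<^sup>2) \<longlongrightarrow> pd a (pd b f) x) (at 0)"
    using second_difference_tendsto_pd[OF assms] .
  show "((\<lambda>h. (f (x + h *\<^sub>R axis a 1 + h *\<^sub>R axis b 1) - f (x + h *\<^sub>R axis b 1)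
            - f (x + h *\<^sub>R axis a 1) + f x) / h\<^sup>2) \<longlongrightarrow> pd b (pd a f) x) (at 0)"
    using second_difference_tendsto_pd[OF assms, where a = a and b = b] by (simp add: algebra_simps)
qed

section \<open>Local existence for ordinary differential equations\<close>

text \<open>Clamping the time to \<open>[-h, h]\<close> makes the Picard iterate a bounded continuous function
  on the whole line, so that Banach's fixed point theorem applies in \<open>real \<Rightarrow>\<^sub>C 'z\<close>.\<close>
definition picard_step :: "('z::euclidean_space \<Rightarrow> 'z) \<Rightarrow> real \<Rightarrow> 'z \<Rightarrow> (real \<Rightarrow>\<^sub>C 'z) \<Rightarrow> real \<Rightarrow> 'z"
  where "picard_step F h z0 \<phi> t =
    z0 + integral {-h..clamp (-h) h t} (\<lambda>s. F (\<phi> s)) - integral {-h..0} (\<lambda>s. F (\<phi> s))"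

lemma clamp_real_in_interval: "0 \<le> h \<Longrightarrow> clamp (-h) h (t::real) \<in> {-h..h}"
  using clamp_in_interval[of "-h" h t] by simp

lemma clamp_real_cancel: "(t::real) \<in> {-h..h} \<Longrightarrow> clamp (-h) h t = t"
  using clamp_cancel_cbox[of t "-h" h] by simp

lemma norm_integral_clamp_diff_le:
  fixes g :: "real \<Rightarrow> 'z::euclidean_space"
  assumes g: "continuous_on UNIV g" "\<And>s. norm (g s) \<le> C" and h: "0 \<le> h"
  shows "norm (integral {-h..clamp (-h) h t} g - integral {-h..0} g) \<le> 3 * h * C"
proof -
  have C: "0 \<le> C" using g(2) norm_ge_zero order_trans by blast
  have bound: "norm (integral {-h..u} g) \<le> C * (u + h)" if "-h \<le> u" for u
    using integral_bound[OF that continuous_on_subset[OF g(1)] g(2)] by simp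
  have "norm (integral {-h..clamp (-h) h t} g) \<le> C * (2 * h)"
    using bound[of "clamp (-h) h t"] clamp_real_in_interval[OF h, of t] C
    by (smt (verit) atLeastAtMost_iff mult_left_mono)
  moreover have "norm (integral {-h..0} g) \<le> C * h" using bound[of 0] h by simp
  ultimately have "norm (integral {-h..clamp (-h) h t} g - integral {-h..0} g) \<le> C * (2 * h) + C * h"
    using norm_triangle_ineq4[of "integral {-h..clamp (-h) h t} g" "integral {-h..0} g"] by linarith
  then show ?thesis by (simp add: algebra_simps)
qed

lemma continuous_on_compose_bcontfun:
  "continuous_on UNIV F \<Longrightarrow> continuous_on S (\<lambda>s. F (apply_bcontfun \<phi> s))"
  by (rule continuous_on_compose2) auto

lemma norm_picard_step_diff_le:
  fixes F :: "'z::euclidean_space \<Rightarrow> 'z"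
  assumes F: "continuous_on UNIV F" "\<And>z. norm (F z) \<le> B" and h: "0 \<le> h"
  shows "norm (picard_step F h z0 \<phi> t - z0) \<le> 3 * h * B"
  using norm_integral_clamp_diff_le[OF continuous_on_compose_bcontfun[OF F(1)] F(2) h]
  by (simp add: picard_step_def algebra_simps)

lemma picard_step_bcontfun:
  fixes F :: "'z::euclidean_space \<Rightarrow> 'z"
  assumes F: "continuous_on UNIV F" "\<And>z. norm (F z) \<le> B" and h: "0 \<le> h"
  shows "picard_step F h z0 \<phi> \<in> bcontfun"
proof (rule bcontfun_normI)
  let ?J = "\<lambda>u. integral {-h..u} (\<lambda>s. F (\<phi> s))"
  have "continuous_on {-h..h} ?J"
    by (intro indefinite_integral_continuous_1 integrable_continuous_real continuous_on_compose_bcontfun F)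
  then have "continuous_on (cbox (-h) h) (\<lambda>u. z0 + ?J u - ?J 0)"
    by (auto intro!: continuous_intros)
  from clamp_continuous_on[OF this]
  show "continuous_on UNIV (picard_step F h z0 \<phi>)"
    unfolding picard_step_def by simp
  show "norm (picard_step F h z0 \<phi> t) \<le> norm z0 + 3 * h * B" for t
    using norm_picard_step_diff_le[OF F h, of z0 \<phi> t] norm_triangle_sub[of "picard_step F h z0 \<phi> t" z0]
    by simp
qed

lemma dist_picard_step_le:
  fixes F :: "'z::euclidean_space \<Rightarrow> 'z"
  assumes F: "L-lipschitz_on UNIV F" and h: "0 \<le> h"
  shows "dist (picard_step F h z0 \<phi> t) (picard_step F h z0 \<psi> t) \<le> 3 * h * L * dist \<phi> \<psi>"
proof -
  let ?g = "\<lambda>s. F (\<phi> s) - F (\<psi> s)"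
  have Fc: "continuous_on UNIV F" using lipschitz_on_continuous_on[OF F] .
  have int: "(\<lambda>s. F (apply_bcontfun \<theta> s)) integrable_on {a..b}" for \<theta> :: "real \<Rightarrow>\<^sub>C 'z" and a b
    by (intro integrable_continuous_real continuous_on_compose_bcontfun Fc)
  have "norm (?g s) \<le> L * dist \<phi> \<psi>" for s
    using lipschitz_onD[OF F, of "\<phi> s" "\<psi> s"] dist_bounded[of \<phi> s \<psi>] lipschitz_on_nonneg[OF F]
    by (simp add: dist_norm) (smt (verit) mult_left_mono)
  moreover have "continuous_on UNIV ?g"
    by (intro continuous_on_diff continuous_on_compose_bcontfun Fc)
  ultimately have "norm (integral {-h..clamp (-h) h t} ?g - integral {-h..0} ?g) \<le> 3 * h * (L * dist \<phi> \<psi>)"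
    using norm_integral_clamp_diff_le h by blast
  then show ?thesis
    unfolding picard_step_def dist_norm integral_diff[OF int int]
    by (simp add: algebra_simps)
qed

lemma ode_solution_exists_global:
  fixes F :: "'z::euclidean_space \<Rightarrow> 'z"
  assumes F: "L-lipschitz_on UNIV F" "\<And>z. norm (F z) \<le> B" and h: "0 < h" "3 * h * L < 1"
  shows "\<exists>\<gamma>. \<gamma> 0 = z0 \<and> (\<forall>t\<in>{-h<..<h}. norm (\<gamma> t - z0) \<le> 3 * h * B \<and>
                                        (\<gamma> has_vector_derivative F (\<gamma> t)) (at t))"
proof -
  have Fc: "continuous_on UNIV F" using lipschitz_on_continuous_on[OF F(1)] .
  define T where "T \<phi> = Bcontfun (picard_step F h z0 \<phi>)" for \<phi>
  have T: "apply_bcontfun (T \<phi>) = picard_step F h z0 \<phi>" for \<phi>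
    unfolding T_def using Bcontfun_inverse[OF picard_step_bcontfun[OF Fc F(2)]] h by simp
  have "dist (T \<phi>) (T \<psi>) \<le> 3 * h * L * dist \<phi> \<psi>" for \<phi> \<psi>
    by (rule dist_bound) (use dist_picard_step_le[OF F(1)] h T in auto)
  then obtain \<phi> where fixed: "T \<phi> = \<phi>"
    using banach_fix_type[of "3 * h * L" T] h lipschitz_on_nonneg[OF F(1)] by auto
  define \<gamma> where "\<gamma> = apply_bcontfun \<phi>"
  let ?J = "\<lambda>u. integral {-h..u} (\<lambda>s. F (\<gamma> s))"
  have \<gamma>: "\<gamma> t = z0 + ?J t - ?J 0" if "t \<in> {-h..h}" for t
    using T[of \<phi>] fixed clamp_real_cancel[OF that] unfolding \<gamma>_def picard_step_def by metis
  show ?thesis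
  proof (intro exI[of _ \<gamma>] conjI ballI)
    show "\<gamma> 0 = z0" using \<gamma>[of 0] h by simp
    fix t assume t: "t \<in> {-h<..<h}"
    show "norm (\<gamma> t - z0) \<le> 3 * h * B"
      using norm_picard_step_diff_le[OF Fc F(2)] h T fixed unfolding \<gamma>_def by (metis less_eq_real_def)
    have "continuous_on {-h..h} (\<lambda>s. F (\<gamma> s))"
      unfolding \<gamma>_def using continuous_on_compose_bcontfun[OF Fc] .
    from integral_has_vector_derivative[OF this, of t]
    have "(?J has_vector_derivative F (\<gamma> t)) (at t)"
      using at_within_interior[of t "{-h..h}"] t by simp
    then have "((\<lambda>u. z0 + ?J u - ?J 0) has_vector_derivative F (\<gamma> t)) (at t)"
      by (auto intro!: derivative_eq_intros)
    then show "(\<gamma> has_vector_derivative F (\<gamma> t)) (at t)"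
      by (rule has_vector_derivative_transform_within_open[of _ _ _ "{-h<..<h}"]) (use t \<gamma> in auto)
  qed
qed

theorem ode_solution_exists_local:
  fixes F :: "'z::euclidean_space \<Rightarrow> 'z"
  assumes L: "L-lipschitz_on (cball z0 r) F" and r: "0 < r"
  shows "\<exists>h>0. \<exists>\<gamma>. \<gamma> 0 = z0 \<and>
           (\<forall>t\<in>{-h<..<h}. \<gamma> t \<in> cball z0 r \<and> (\<gamma> has_vector_derivative F (\<gamma> t)) (at t))"
proof -
  have L0: "0 \<le> L" using L lipschitz_on_nonneg by blast
  define P where "P = closest_point (cball z0 r)"
  have P: "P z \<in> cball z0 r" "dist (P z) (P w) \<le> dist z w" for z w
    unfolding P_def using r by (intro closest_point_in_set closest_point_lipschitz; simp)+
  have "L-lipschitz_on UNIV (\<lambda>z. F (P z))"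
  proof (rule lipschitz_onI[OF _ L0])
    fix z w :: 'z
    have "dist (F (P z)) (F (P w)) \<le> L * dist (P z) (P w)" using lipschitz_onD[OF L P(1) P(1)] .
    also have "\<dots> \<le> L * dist z w" using P(2) L0 by (simp add: mult_left_mono)
    finally show "dist (F (P z)) (F (P w)) \<le> L * dist z w" .
  qed
  moreover define B where "B = norm (F z0) + L * r"
  have "norm (F (P z)) \<le> B" for z
  proof -
    have "dist (F (P z)) (F z0) \<le> L * r"
      using lipschitz_onD[OF L P(1), of z0] r P(1)[of z] L0
      by (smt (verit, best) centre_in_cball dist_commute mem_cball mult_left_mono)
    then show ?thesis unfolding B_def using norm_triangle_ineq2[of "F (P z)" "F z0"] by (simp add: dist_norm)
  qed
  moreover define h where "h = min (1 / (6 * (L + 1))) (r / (3 * (B + 1)))"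
  have B0: "0 \<le> B" using L0 r by (simp add: B_def)
  then have h: "0 < h" "3 * h * L < 1" "3 * h * B \<le> r"
    using L0 r by (auto simp: h_def min_def field_simps)
  ultimately obtain \<gamma> where \<gamma>: "\<gamma> 0 = z0" "\<And>t. t \<in> {-h<..<h} \<Longrightarrow>
      norm (\<gamma> t - z0) \<le> 3 * h * B \<and> (\<gamma> has_vector_derivative F (P (\<gamma> t))) (at t)"
    using ode_solution_exists_global[of L "\<lambda>z. F (P z)" B h z0] by blast
  have "\<gamma> t \<in> cball z0 r" if "t \<in> {-h<..<h}" for t
    using \<gamma>(2)[OF that] h(3) by (simp add: dist_norm norm_minus_commute)
  moreover have "P (\<gamma> t) = \<gamma> t" if "\<gamma> t \<in> cball z0 r" for t
    unfolding P_def using closest_point_self[OF that] .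
  ultimately show ?thesis using h(1) \<gamma> by (intro exI[of _ h] exI[of _ \<gamma>]) auto
qed

section \<open>Geodesics of a smooth connection\<close>

definition lipschitzian :: "'a::metric_space set \<Rightarrow> ('a \<Rightarrow> 'b::metric_space) \<Rightarrow> bool"
  where "lipschitzian S f \<longleftrightarrow> (\<exists>L. L-lipschitz_on S f)"

lemma lipschitzian_mult:
  fixes f g :: "'a::heine_borel \<Rightarrow> real"
  assumes "lipschitzian S f" "lipschitzian S g" "bounded S"
  shows "lipschitzian S (\<lambda>z. f z * g z)"
proof -
  obtain Lf Lg where Lf: "Lf-lipschitz_on S f" and Lg: "Lg-lipschitz_on S g"
    using assms unfolding lipschitzian_def by blast
  have "bounded (f ` S)" "bounded (g ` S)"
    using assms(3) Lf Lg by (auto intro!: bounded_uniformly_continuous_image lipschitz_on_uniformly_continuous)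
  then obtain Mf Mg where Mf: "Mf > 0" "\<And>z. z \<in> S \<Longrightarrow> \<bar>f z\<bar> \<le> Mf"
    and Mg: "Mg > 0" "\<And>z. z \<in> S \<Longrightarrow> \<bar>g z\<bar> \<le> Mg"
    unfolding bounded_pos by auto
  have "(Mf * Lg + Mg * Lf)-lipschitz_on S (\<lambda>z. f z * g z)"
  proof (rule lipschitz_onI)
    fix z w assume zw: "z \<in> S" "w \<in> S"
    have "f z * g z - f w * g w = f z * (g z - g w) + g w * (f z - f w)" by (simp add: algebra_simps)
    then have "\<bar>f z * g z - f w * g w\<bar> \<le> \<bar>f z\<bar> * \<bar>g z - g w\<bar> + \<bar>g w\<bar> * \<bar>f z - f w\<bar>"
      by (metis abs_mult abs_triangle_ineq)
    also have "\<dots> \<le> Mf * (Lg * dist z w) + Mg * (Lf * dist z w)"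
      using zw Mf Mg lipschitz_onD[OF Lf zw] lipschitz_onD[OF Lg zw]
      by (intro add_mono mult_mono) (auto simp: dist_real_def)
    finally show "dist (f z * g z) (f w * g w) \<le> (Mf * Lg + Mg * Lf) * dist z w"
      by (simp add: dist_real_def algebra_simps)
  qed (use Mf Mg lipschitz_on_nonneg[OF Lf] lipschitz_on_nonneg[OF Lg] in simp)
  then show ?thesis unfolding lipschitzian_def by blast
qed

lemma lipschitzian_sum:
  fixes f :: "'i \<Rightarrow> 'a::metric_space \<Rightarrow> 'b::real_normed_vector"
  assumes "finite A" "\<And>a. a \<in> A \<Longrightarrow> lipschitzian S (f a)"
  shows "lipschitzian S (\<lambda>z. \<Sum>a\<in>A. f a z)"
  using assms
proof (induction A rule: finite_induct)
  case empty
  then show ?case unfolding lipschitzian_def using lipschitz_on_constant by auto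
next
  case (insert a A)
  then have "lipschitzian S (f a)" "lipschitzian S (\<lambda>z. \<Sum>a\<in>A. f a z)" by auto
  then obtain L1 L2 where "L1-lipschitz_on S (f a)" "L2-lipschitz_on S (\<lambda>z. \<Sum>a\<in>A. f a z)"
    unfolding lipschitzian_def by auto
  from lipschitz_on_add[OF this] show ?case using insert unfolding lipschitzian_def by auto
qed

lemma lipschitzian_vec:
  fixes f :: "'n::finite \<Rightarrow> 'a::metric_space \<Rightarrow> real"
  assumes "\<And>c. lipschitzian S (f c)"
  shows "lipschitzian S (\<lambda>z. \<chi> c. f c z)"
proof -
  obtain L where L: "\<And>c. (L c)-lipschitz_on S (f c)" using assms unfolding lipschitzian_def by metis
  have "(\<Sum>c\<in>UNIV. L c)-lipschitz_on S (\<lambda>z. \<chi> c. f c z)"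
  proof (rule lipschitz_onI)
    fix z w assume zw: "z \<in> S" "w \<in> S"
    have "(\<chi> c. f c z) - (\<chi> c. f c w) = ((\<chi> c. f c z - f c w) :: real^'n)"
      by (simp add: vec_eq_iff)
    then have "dist (\<chi> c. f c z) (\<chi> c. f c w) = norm ((\<chi> c. f c z - f c w) :: real^'n)"
      by (simp add: dist_norm)
    also have "\<dots> \<le> (\<Sum>c\<in>UNIV. \<bar>f c z - f c w\<bar>)"
      using norm_le_l1_cart[of "(\<chi> c. f c z - f c w) :: real^'n"] by simp
    also have "\<dots> \<le> (\<Sum>c\<in>UNIV. L c * dist z w)"
      by (intro sum_mono) (use lipschitz_onD[OF L zw] in \<open>simp add: dist_real_def\<close>)
    finally show "dist (\<chi> c. f c z) (\<chi> c. f c w) \<le> (\<Sum>c\<in>UNIV. L c) * dist z w"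
      by (simp add: sum_distrib_right)
  qed (use L lipschitz_on_nonneg in \<open>meson sum_nonneg\<close>)
  then show ?thesis unfolding lipschitzian_def by blast
qed

lemma lipschitzian_compose_nonexpansive:
  assumes "L-lipschitz_on T f" "g ` S \<subseteq> T" "\<And>z w. dist (g z) (g w) \<le> dist z w"
  shows "lipschitzian S (\<lambda>z. f (g z))"
proof -
  have L0: "L \<ge> 0" using assms(1) lipschitz_on_nonneg by blast
  have "L-lipschitz_on S (\<lambda>z. f (g z))"
  proof (rule lipschitz_onI[OF _ L0])
    fix z w assume "z \<in> S" "w \<in> S"
    then have "dist (f (g z)) (f (g w)) \<le> L * dist (g z) (g w)"
      using lipschitz_onD[OF assms(1)] assms(2) by blast
    also have "\<dots> \<le> L * dist z w" using assms(3) L0 by (simp add: mult_left_mono)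
    finally show "dist (f (g z)) (f (g w)) \<le> L * dist z w" .
  qed
  then show ?thesis unfolding lipschitzian_def by blast
qed

lemma frechet_derivative_eq_sum_pd:
  fixes f :: "real^'n::finite \<Rightarrow> real"
  assumes "f differentiable (at p)"
  shows "frechet_derivative f (at p) v = (\<Sum>i\<in>UNIV. v $ i * pd i f p)"
proof -
  have lin: "linear (frechet_derivative f (at p))"
    using has_derivative_frechet_derivative[OF assms] has_derivative_linear by blast
  have "frechet_derivative f (at p) v = frechet_derivative f (at p) (\<Sum>i\<in>UNIV. v $ i *\<^sub>R axis i 1)"
    by (simp add: basis_expansion scalar_mult_eq_scaleR[symmetric])
  then show ?thesis by (simp add: linear_sum[OF lin] linear_scale[OF lin] pd_def)
qed

lemma smooth_fun_lipschitz_on_cball: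
  fixes f :: "real^'n::finite \<Rightarrow> real"
  assumes "cball y r \<subseteq> U" "smooth_fun U f"
  shows "\<exists>L. L-lipschitz_on (cball y r) f"
proof -
  have "continuous_on (cball y r) (\<lambda>p. \<Sum>i\<in>UNIV. \<bar>pd i f p\<bar>)"
    using assms smooth_fun_continuous[OF smooth_fun_pd]
    by (intro continuous_intros continuous_at_imp_continuous_on) blast
  then have "bounded ((\<lambda>p. \<Sum>i\<in>UNIV. \<bar>pd i f p\<bar>) ` cball y r)"
    by (intro compact_imp_bounded compact_continuous_image) auto
  then obtain M where M: "M > 0" "\<And>p. p \<in> cball y r \<Longrightarrow> (\<Sum>i\<in>UNIV. \<bar>pd i f p\<bar>) \<le> M"
    unfolding bounded_pos by fastforce
  have diff: "f differentiable (at p)" if "p \<in> cball y r" for p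
    using assms that smooth_fun_differentiable by blast
  have "onorm (frechet_derivative f (at p)) \<le> M" if p: "p \<in> cball y r" for p
  proof (rule onorm_le)
    fix v :: "real^'n"
    have "\<bar>frechet_derivative f (at p) v\<bar> \<le> (\<Sum>i\<in>UNIV. \<bar>v $ i\<bar> * \<bar>pd i f p\<bar>)"
      unfolding frechet_derivative_eq_sum_pd[OF diff[OF p]] abs_mult[symmetric] by (rule sum_abs)
    also have "\<dots> \<le> (\<Sum>i\<in>UNIV. norm v * \<bar>pd i f p\<bar>)"
      by (intro sum_mono mult_right_mono component_le_norm_cart) auto
    also have "\<dots> \<le> M * norm v"
      using mult_left_mono[OF M(2)[OF p] norm_ge_zero[of v]]
      by (simp add: sum_distrib_left[symmetric] mult.commute)
    finally show "norm (frechet_derivative f (at p) v) \<le> M * norm v" by simp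
  qed
  then have "M-lipschitz_on (cball y r) f"
    using diff M(1) has_derivative_frechet_derivative
    by (intro bounded_derivative_imp_lipschitz[OF has_derivative_at_withinI]) auto
  then show ?thesis by blast
qed

definition christoffel_quad :: "'n::finite christoffel \<Rightarrow> real^'n \<Rightarrow> real^'n \<Rightarrow> real^'n"
  where "christoffel_quad G p v = (\<chi> c. \<Sum>a\<in>UNIV. \<Sum>b\<in>UNIV. G p a b c * v $ a * v $ b)"

lemma christoffel_quad_eq_iff:
  "w + christoffel_quad G p v = s *\<^sub>R v \<longleftrightarrow>
     (\<forall>c. w $ c + (\<Sum>a\<in>UNIV. \<Sum>b\<in>UNIV. G p a b c * v $ a * v $ b) = s * v $ c)"
  by (simp add: christoffel_quad_def vec_eq_iff)

lemma pregeodesic_iff: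
  "pregeodesic U G I \<gamma> \<longleftrightarrow>
     (\<exists>\<gamma>' \<gamma>'' f. \<forall>t\<in>I. \<gamma> t \<in> U \<and> (\<gamma> has_vector_derivative \<gamma>' t) (at t) \<and>
        (\<gamma>' has_vector_derivative \<gamma>'' t) (at t) \<and> \<gamma>' t \<noteq> 0 \<and>
        \<gamma>'' t + christoffel_quad G (\<gamma> t) (\<gamma>' t) = f t *\<^sub>R \<gamma>' t)"
  unfolding pregeodesic_def christoffel_quad_eq_iff ..

lemma has_vector_derivative_fst:
  "(f has_vector_derivative D) F \<Longrightarrow> ((\<lambda>t. fst (f t)) has_vector_derivative fst D) F"
  unfolding has_vector_derivative_def using has_derivative_fst by fastforce

lemma has_vector_derivative_snd:
  "(f has_vector_derivative D) F \<Longrightarrow> ((\<lambda>t. snd (f t)) has_vector_derivative snd D) F"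
  unfolding has_vector_derivative_def using has_derivative_snd by fastforce

lemma christoffel_quad_lipschitzian:
  fixes G :: "'n::finite christoffel"
  assumes "cball y r \<subseteq> U" "\<And>a b c. smooth_fun U (\<lambda>p. G p a b c)"
  shows "lipschitzian (cball (y, v) r) (\<lambda>z. christoffel_quad G (fst z) (snd z))"
proof -
  have "lipschitzian (cball (y, v) r) (\<lambda>z. G (fst z) a b c)" for a b c
  proof -
    obtain L where "L-lipschitz_on (cball y r) (\<lambda>p. G p a b c)"
      using smooth_fun_lipschitz_on_cball[OF assms] by blast
    moreover have "fst ` cball (y, v) r \<subseteq> cball y r"
    proof (rule image_subsetI)
      fix z assume "z \<in> cball (y, v) r"
      then have "dist (y, v) z \<le> r" by simp
      moreover have "dist y (fst z) \<le> dist (y, v) z" using dist_fst_le[of "(y, v)" z] by simp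
      ultimately show "fst z \<in> cball y r" by simp
    qed
    ultimately show ?thesis by (rule lipschitzian_compose_nonexpansive) (rule dist_fst_le)
  qed
  moreover have "lipschitzian (cball (y, v) r) (\<lambda>z. snd z $ a)" for a
  proof -
    have "dist (snd z $ a) (snd w $ a) \<le> 1 * dist z w" for z w :: "(real^'n) \<times> (real^'n)"
      using dist_vec_nth_le[of "snd z" a "snd w"] dist_snd_le[of z w] by simp
    then have "1-lipschitz_on (cball (y, v) r) (\<lambda>z. snd z $ a)" by (intro lipschitz_onI) auto
    then show ?thesis unfolding lipschitzian_def by blast
  qed
  ultimately show ?thesis
    unfolding christoffel_quad_def by (intro lipschitzian_vec lipschitzian_sum lipschitzian_mult) auto
qed

lemma geodesic_exists:
  fixes G :: "'n::finite christoffel"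
  assumes U: "open U" "y \<in> U" and G: "\<And>a b c. smooth_fun U (\<lambda>p. G p a b c)" and v: "v \<noteq> 0"
  shows "\<exists>h>0. \<exists>\<gamma> \<gamma>'. \<gamma> 0 = y \<and> \<gamma>' 0 = v \<and> (\<forall>t\<in>{-h<..<h}. \<gamma> t \<in> U \<and> \<gamma>' t \<noteq> 0 \<and>
           (\<gamma> has_vector_derivative \<gamma>' t) (at t) \<and>
           (\<gamma>' has_vector_derivative - christoffel_quad G (\<gamma> t) (\<gamma>' t)) (at t))"
proof -
  obtain r0 where r0: "0 < r0" "cball y r0 \<subseteq> U" using U open_contains_cball by blast
  define r where "r = min r0 (norm v / 2)"
  have "r \<le> norm v / 2" "norm v / 2 < norm v" using v by (auto simp: r_def)
  then have "r < norm v" by linarith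
  then have r: "0 < r" "r < norm v" "cball y r \<subseteq> U" using r0 v by (auto simp: r_def)
  define F where "F z = (snd z, - christoffel_quad G (fst z) (snd z))" for z :: "(real^'n) \<times> (real^'n)"
  obtain L where "L-lipschitz_on (cball (y, v) r) F"
  proof -
    have "1-lipschitz_on (cball (y, v) r) snd" by (intro lipschitz_onI) (auto simp: dist_snd_le)
    moreover obtain M where "M-lipschitz_on (cball (y, v) r) (\<lambda>z. - christoffel_quad G (fst z) (snd z))"
      using christoffel_quad_lipschitzian[where G = G, OF r(3) G] lipschitz_on_minus unfolding lipschitzian_def by blast
    ultimately have "(sqrt (1\<^sup>2 + M\<^sup>2))-lipschitz_on (cball (y, v) r) F"
      unfolding F_def by (rule lipschitz_on_Pair)
    then show ?thesis by (rule that)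
  qed
  from ode_solution_exists_local[OF this r(1)] obtain h \<phi> where \<phi>: "h > 0" "\<phi> 0 = (y, v)"
    "\<And>t. t \<in> {-h<..<h} \<Longrightarrow> \<phi> t \<in> cball (y, v) r \<and> (\<phi> has_vector_derivative F (\<phi> t)) (at t)"
    by blast
  have sol: "fst (\<phi> t) \<in> U \<and> snd (\<phi> t) \<noteq> 0 \<and>
      ((\<lambda>t. fst (\<phi> t)) has_vector_derivative snd (\<phi> t)) (at t) \<and>
      ((\<lambda>t. snd (\<phi> t)) has_vector_derivative - christoffel_quad G (fst (\<phi> t)) (snd (\<phi> t))) (at t)"
    if t: "t \<in> {-h<..<h}" for t
  proof (intro conjI)
    show "fst (\<phi> t) \<in> U" using \<phi>(3)[OF t] dist_fst_le[of "(y, v)" "\<phi> t"] r(3) by auto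
    show "snd (\<phi> t) \<noteq> 0" using \<phi>(3)[OF t] dist_snd_le[of "(y, v)" "\<phi> t"] r(2) by auto
    show "((\<lambda>t. fst (\<phi> t)) has_vector_derivative snd (\<phi> t)) (at t)"
      using has_vector_derivative_fst[OF conjunct2[OF \<phi>(3)[OF t]]] by (simp add: F_def)
    show "((\<lambda>t. snd (\<phi> t)) has_vector_derivative - christoffel_quad G (fst (\<phi> t)) (snd (\<phi> t))) (at t)"
      using has_vector_derivative_snd[OF conjunct2[OF \<phi>(3)[OF t]]] by (simp add: F_def)
  qed
  show ?thesis
    by (intro exI[of _ h] conjI exI[of _ "\<lambda>t. fst (\<phi> t)"] exI[of _ "\<lambda>t. snd (\<phi> t)"] ballI)
       (use \<phi>(1,2) sol in auto)
qed

lemma pregeodesic_initial_acceleration: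
  assumes geo: "pregeodesic U G {-h<..<h} \<gamma>" and h: "0 < h"
    and \<gamma>': "\<And>t. t \<in> {-h<..<h} \<Longrightarrow> (\<gamma> has_vector_derivative \<gamma>' t) (at t)"
    and A: "(\<gamma>' has_vector_derivative A) (at 0)"
  shows "\<exists>f. A + christoffel_quad G (\<gamma> 0) (\<gamma>' 0) = f *\<^sub>R \<gamma>' 0"
proof -
  obtain \<gamma>1 \<gamma>2 f where g: "\<And>t. t \<in> {-h<..<h} \<Longrightarrow> (\<gamma> has_vector_derivative \<gamma>1 t) (at t) \<and>
      (\<gamma>1 has_vector_derivative \<gamma>2 t) (at t) \<and> \<gamma>2 t + christoffel_quad G (\<gamma> t) (\<gamma>1 t) = f t *\<^sub>R \<gamma>1 t"
    using geo unfolding pregeodesic_iff by blast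
  have \<gamma>1: "\<gamma>1 t = \<gamma>' t" if "t \<in> {-h<..<h}" for t
    using vector_derivative_unique_at g[OF that] \<gamma>'[OF that] by blast
  have "(\<gamma>' has_vector_derivative \<gamma>2 0) (at 0)"
    by (rule has_vector_derivative_transform_within_open[of \<gamma>1 _ _ "{-h<..<h}"]) (use g \<gamma>1 h in auto)
  then have "\<gamma>2 0 = A" using vector_derivative_unique_at A by blast
  then show ?thesis using g[of 0] \<gamma>1[of 0] h by auto
qed

lemma proj_equiv_christoffel_quad_radial:
  fixes G G' :: "'n::finite christoffel"
  assumes "open U" "y \<in> U" "\<And>a b c. smooth_fun U (\<lambda>p. G p a b c)" and pe: "proj_equiv U G G'"
  shows "\<exists>\<mu>. christoffel_quad G' y v - christoffel_quad G y v = \<mu> *\<^sub>R v"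
proof (cases "v = 0")
  case True
  then show ?thesis by (simp add: christoffel_quad_def vec_eq_iff)
next
  case False
  then obtain h \<gamma> \<gamma>' where h: "h > 0" "\<gamma> 0 = y" "\<gamma>' 0 = v" and \<gamma>: "\<forall>t\<in>{-h<..<h}. \<gamma> t \<in> U \<and> \<gamma>' t \<noteq> 0 \<and>
      (\<gamma> has_vector_derivative \<gamma>' t) (at t) \<and>
      (\<gamma>' has_vector_derivative - christoffel_quad G (\<gamma> t) (\<gamma>' t)) (at t)"
    using geodesic_exists[where G = G, OF assms(1-3) False] by blast
  have "pregeodesic U G {-h<..<h} \<gamma>"
    unfolding pregeodesic_iff using \<gamma>
    by (intro exI[of _ \<gamma>'] exI[of _ "\<lambda>t. - christoffel_quad G (\<gamma> t) (\<gamma>' t)"] exI[of _ "\<lambda>t. 0"]) auto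
  then have geo': "pregeodesic U G' {-h<..<h} \<gamma>" using pe h(1) unfolding proj_equiv_def by auto
  have "\<And>t. t \<in> {-h<..<h} \<Longrightarrow> (\<gamma> has_vector_derivative \<gamma>' t) (at t)" using \<gamma> by blast
  moreover have "(\<gamma>' has_vector_derivative - christoffel_quad G y v) (at 0)" using \<gamma> h by auto
  ultimately obtain f where "- christoffel_quad G y v + christoffel_quad G' y v = f *\<^sub>R v"
    using pregeodesic_initial_acceleration[OF geo' h(1)] h by metis
  then show ?thesis by (intro exI[of _ f]) (simp add: algebra_simps)
qed

section \<open>Projectively equivalent connections\<close>

lemma if_zero_arith:
  fixes x y z :: real
  shows "x * (if P then y else 0) = (if P then x * y else 0)"
    and "(if P then y else 0) * x = (if P then y * x else 0)"
    and "(if P then y else 0) + z = (if P then y + z else z)"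
  by auto

lemma cubic_form_polarization:
  fixes \<tau> :: "'n::finite \<Rightarrow> 'n \<Rightarrow> 'n \<Rightarrow> real"
  defines "C \<equiv> \<lambda>v::real^'n. \<Sum>a\<in>UNIV. \<Sum>b\<in>UNIV. \<Sum>d\<in>UNIV. \<tau> a b d * v$a * v$b * v$d"
  shows "C (x+y+z) - C (x+y) - C (x+z) - C (y+z) + C x + C y + C z =
    (\<Sum>a\<in>UNIV. \<Sum>b\<in>UNIV. \<Sum>d\<in>UNIV. \<tau> a b d * (x$a*y$b*z$d + x$a*z$b*y$d + y$a*x$b*z$d
        + y$a*z$b*x$d + z$a*x$b*y$d + z$a*y$b*x$d))"
  unfolding C_def by (simp add: sum_subtractf[symmetric] sum.distrib[symmetric] algebra_simps)

lemma cubic_form_axis: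
  fixes \<tau> :: "'n::finite \<Rightarrow> 'n \<Rightarrow> 'n \<Rightarrow> real"
  shows "(\<Sum>a\<in>UNIV. \<Sum>b\<in>UNIV. \<Sum>d\<in>UNIV.
      \<tau> a b d * ((axis i 1 :: real^'n)$a * (axis j 1 :: real^'n)$b * (axis l 1 :: real^'n)$d)) = \<tau> i j l"
  by (simp add: axis_def if_zero_arith cong: if_cong)

text \<open>A symmetric \<open>S\<close> with \<open>S(v, v)\<close> parallel to \<open>v\<close> for every \<open>v\<close> is \<open>\<delta> \<otimes> u + u \<otimes> \<delta>\<close>:
  the cubic forms \<open>S(v, v)\<^sup>c v\<^sup>e - S(v, v)\<^sup>e v\<^sup>c\<close> vanish, hence so do their polarizations,
  and a contraction of these solves for \<open>S\<close>.\<close>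
theorem radial_symmetric_tensor_eq:
  fixes S :: "'n::finite \<Rightarrow> 'n \<Rightarrow> 'n \<Rightarrow> real"
  assumes sym: "\<And>a b c. S a b c = S b a c"
    and radial: "\<And>v::real^'n. \<exists>\<mu>. (\<chi> c. \<Sum>a\<in>UNIV. \<Sum>b\<in>UNIV. S a b c * v$a * v$b) = \<mu> *\<^sub>R v"
  shows "S a b c = kdelta c a * ((\<Sum>l\<in>UNIV. S b l l) / (real CARD('n) + 1))
                 + kdelta c b * ((\<Sum>l\<in>UNIV. S a l l) / (real CARD('n) + 1))"
proof -
  define \<tau> where "\<tau> c e a b d = S a b c * kdelta e d - S a b e * kdelta c d" for c e a b d
  have cubic: "(\<Sum>a\<in>UNIV. \<Sum>b\<in>UNIV. \<Sum>d\<in>UNIV. \<tau> c e a b d * v$a * v$b * v$d) =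
      (\<Sum>a\<in>UNIV. \<Sum>b\<in>UNIV. S a b c * v$a * v$b) * v$e - (\<Sum>a\<in>UNIV. \<Sum>b\<in>UNIV. S a b e * v$a * v$b) * v$c"
    for c e and v :: "real^'n"
    by (simp add: \<tau>_def kdelta_def if_zero_arith left_diff_distrib sum_subtractf sum_distrib_right
        mult.assoc cong: if_cong)
  have cubic_zero: "(\<Sum>a\<in>UNIV. \<Sum>b\<in>UNIV. \<Sum>d\<in>UNIV. \<tau> c e a b d * v$a * v$b * v$d) = 0"
    for c e and v :: "real^'n"
  proof -
    obtain \<mu> where "\<forall>c. (\<Sum>a\<in>UNIV. \<Sum>b\<in>UNIV. S a b c * v$a * v$b) = \<mu> * v$c"
      using radial[of v] by (auto simp: vec_eq_iff)
    then show ?thesis unfolding cubic by simp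
  qed
  have symmetrized_zero:
    "\<tau> c e i j l + \<tau> c e i l j + \<tau> c e j i l + \<tau> c e j l i + \<tau> c e l i j + \<tau> c e l j i = 0" for c e i j l
    using cubic_form_polarization[of "\<tau> c e" "axis i 1" "axis j 1" "axis l 1", unfolded cubic_zero]
    by (simp add: distrib_left sum.distrib cubic_form_axis)
  define N where "N = real CARD('n)"
  define T where "T a = (\<Sum>l\<in>UNIV. S a l l)" for a
  have T': "(\<Sum>l\<in>UNIV. S l a l) = T a" for a unfolding T_def using sym by simp
  have s1: "(\<Sum>l\<in>UNIV. \<tau> c l a b l) = N * S a b c - S a b c" for a b
    by (simp add: \<tau>_def kdelta_def sum_subtractf N_def if_zero_arith cong: if_cong)
  have s2: "(\<Sum>l\<in>UNIV. \<tau> c l a l b) = S a b c - kdelta c b * T a" for a b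
    by (simp add: \<tau>_def kdelta_def sum_subtractf T_def sum_distrib_left if_zero_arith cong: if_cong)
  have s3: "(\<Sum>l\<in>UNIV. \<tau> c l l a b) = S b a c - kdelta c b * T a" for a b
    using T'[of a] by (simp add: \<tau>_def kdelta_def sum_subtractf sum_distrib_left if_zero_arith cong: if_cong)
  have "0 = (\<Sum>l\<in>UNIV. \<tau> c l a b l + \<tau> c l a l b + \<tau> c l b a l + \<tau> c l b l a + \<tau> c l l a b + \<tau> c l l b a)"
    using symmetrized_zero by simp
  also have "\<dots> = 2 * (N + 1) * S a b c - 2 * kdelta c a * T b - 2 * kdelta c b * T a"
    using sym[of b a c] s1[of a b] s1[of b a] s2[of a b] s2[of b a] s3[of a b] s3[of b a]
    by (simp add: sum.distrib algebra_simps)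
  finally have "(N + 1) * S a b c = kdelta c a * T b + kdelta c b * T a" by (simp add: algebra_simps)
  moreover have "N + 1 > 0" by (simp add: N_def)
  ultimately have "S a b c = (kdelta c a * T b + kdelta c b * T a) / (N + 1)"
    by (metis nonzero_mult_div_cancel_left less_irrefl)
  then show ?thesis unfolding N_def[symmetric] T_def[symmetric] by (simp add: add_divide_distrib)
qed

lemma christoffel_quad_diff:
  "christoffel_quad G' y v - christoffel_quad G y v
     = (\<chi> c. \<Sum>a\<in>UNIV. \<Sum>b\<in>UNIV. (G' y a b c - G y a b c) * v$a * v$b)"
proof -
  have "(\<Sum>a\<in>UNIV. \<Sum>b\<in>UNIV. (G' y a b c - G y a b c) * v$a * v$b)
      = (\<Sum>a\<in>UNIV. \<Sum>b\<in>UNIV. G' y a b c * v$a * v$b) - (\<Sum>a\<in>UNIV. \<Sum>b\<in>UNIV. G y a b c * v$a * v$b)"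
    for c by (simp add: left_diff_distrib sum_subtractf)
  then show ?thesis unfolding christoffel_quad_def by (simp add: vec_eq_iff)
qed

text \<open>The one-form \<open>\<Upsilon>\<close> of a projective change \<open>\<nabla>' = \<nabla> + \<delta> \<otimes> \<Upsilon> + \<Upsilon> \<otimes> \<delta>\<close>, recovered as a trace.\<close>
definition proj_shift :: "'n::finite christoffel \<Rightarrow> 'n christoffel \<Rightarrow> real^'n \<Rightarrow> 'n \<Rightarrow> real"
  where "proj_shift G G' y b = (\<Sum>l\<in>UNIV. G' y b l l - G y b l l) / (real CARD('n) + 1)"

theorem proj_equiv_christoffel_eq:
  fixes G G' :: "'n::finite christoffel"
  assumes U: "open U" "y \<in> U" and G: "torsion_free_conn U G"
    and G'sym: "\<And>a b c. G' y a b c = G' y b a c" and pe: "proj_equiv U G G'"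
  shows "G' y a b c = G y a b c + kdelta c a * proj_shift G G' y b + kdelta c b * proj_shift G G' y a"
proof -
  have Gs: "\<And>a b c. smooth_fun U (\<lambda>p. G p a b c)" and Gsym: "\<And>a b c. G y a b c = G y b a c"
    using G U unfolding torsion_free_conn_def by auto
  let ?S = "\<lambda>a b c. G' y a b c - G y a b c"
  have radial: "\<exists>\<mu>. (\<chi> c. \<Sum>a\<in>UNIV. \<Sum>b\<in>UNIV. ?S a b c * v$a * v$b) = \<mu> *\<^sub>R v" for v
    using proj_equiv_christoffel_quad_radial[where G = G, OF U Gs pe] unfolding christoffel_quad_diff .
  have sym: "?S a b c = ?S b a c" for a b c by (simp only: Gsym[of a b c] G'sym[of a b c])
  have "?S a b c = kdelta c a * proj_shift G G' y b + kdelta c b * proj_shift G G' y a"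
    unfolding proj_shift_def using radial_symmetric_tensor_eq[of ?S, OF sym radial] .
  then show ?thesis by simp
qed

text \<open>Under \<open>\<nabla>' = \<nabla> + \<delta> \<otimes> \<Upsilon> + \<Upsilon> \<otimes> \<delta>\<close> the Schouten tensor changes by
  \<open>\<mu>\<^sub>b\<^sub>d = \<nabla>\<^sub>b\<Upsilon>\<^sub>d - \<Upsilon>\<^sub>b\<Upsilon>\<^sub>d\<close>, exactly compensating the change of the curvature.\<close>
lemma proj_weyl_eq_pointwise:
  fixes G G' :: "'n::finite christoffel"
  assumes symG: "\<And>a b c. G x a b c = G x b a c"
    and shift: "\<And>a b c. G' x a b c = G x a b c + kdelta c a * u b + kdelta c b * u a"
    and dshift: "\<And>e a b c. pd e (\<lambda>y. G' y a b c) x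
                   = pd e (\<lambda>y. G y a b c) x + kdelta c a * Du e b + kdelta c b * Du e a"
    and card: "CARD('n) \<ge> 2"
  shows "proj_weyl G' x a b c d = proj_weyl G x a b c d"
proof -
  define \<mu> where "\<mu> b d = Du b d - (\<Sum>e\<in>UNIV. u e * G x b d e) - u b * u d" for b d
  have curv': "curv G' x a b c d = curv G x a b c d - kdelta c a * \<mu> b d + kdelta c b * \<mu> a d
      + kdelta c d * (Du a b - Du b a)" for a b c d
    unfolding curv_def shift dshift \<mu>_def
    using symG[of a b] symG[of a d] symG[of b d]
    by (simp add: kdelta_def if_zero_arith distrib_left distrib_right sum.distrib sum_subtractf
        sum_distrib_left cong: if_cong)
  define N where "N = real CARD('n)"
  have ric': "ricci G' x b d = ricci G x b d - (N - 1) * \<mu> b d + Du d b - Du b d" for b d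
    unfolding ricci_def curv'
    by (simp only: right_diff_distrib sum.distrib sum_subtractf)
       (simp add: kdelta_def if_zero_arith N_def algebra_simps cong: if_cong)
  have \<mu>_swap: "\<mu> b a = \<mu> a b - Du a b + Du b a" for a b
    unfolding \<mu>_def using symG[of a b] by simp
  have sch': "schouten G' x a b = schouten G x a b - \<mu> a b" for a b
  proof -
    have "(N - 1) * (N - 1 + 2) \<noteq> 0" using card by (simp add: N_def)
    moreover have "(N - 1 + 1) * ricci G' x a b + ricci G' x b a =
          ((N - 1 + 1) * ricci G x a b + ricci G x b a) - ((N - 1) * (N - 1 + 2)) * \<mu> a b"
      unfolding ric' \<mu>_swap[of b a] by (simp add: algebra_simps)
    ultimately show ?thesis
      unfolding schouten_def Let_def N_def[symmetric] by (simp add: diff_divide_distrib)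
  qed
  show ?thesis unfolding proj_weyl_def sch' curv' \<mu>_swap[of b a] by (simp add: algebra_simps)
qed

theorem proj_weyl_eq_of_shift:
  fixes G G' :: "'n::finite christoffel"
  assumes U: "open U" "x \<in> U" and G: "torsion_free_conn U G"
    and shift: "\<And>y a b c. y \<in> U \<Longrightarrow> G' y a b c = G y a b c + kdelta c a * u y b + kdelta c b * u y a"
    and u: "\<And>b. (\<lambda>y. u y b) differentiable (at x)" and card: "CARD('n) \<ge> 2"
  shows "proj_weyl G' x a b c d = proj_weyl G x a b c d"
proof (rule proj_weyl_eq_pointwise[where u = "u x" and Du = "\<lambda>e b. pd e (\<lambda>y. u y b) x"])
  have Gd: "(\<lambda>y. G y a b c) differentiable (at x)" for a b c
    using G U smooth_fun_differentiable unfolding torsion_free_conn_def by blast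
  show "pd e (\<lambda>y. G' y a b c) x
      = pd e (\<lambda>y. G y a b c) x + kdelta c a * pd e (\<lambda>y. u y b) x + kdelta c b * pd e (\<lambda>y. u y a) x"
    for e a b c
  proof -
    have "pd e (\<lambda>y. G' y a b c) x = pd e (\<lambda>y. G y a b c + kdelta c a * u y b + kdelta c b * u y a) x"
      by (rule pd_transform_within_open[OF U]) (use shift in auto)
    then show ?thesis using Gd u by (simp add: pd_add pd_cmult differentiable_add differentiable_mult)
  qed
qed (use G U shift card in \<open>auto simp: torsion_free_conn_def\<close>)

section \<open>Curvature of a Sasaki structure\<close>

lemma skew_adjoint_trace_eq_zero:
  fixes M gg :: "'n::finite \<Rightarrow> 'n \<Rightarrow> real"
  assumes det: "det (\<chi> i j. gg i j) \<noteq> 0"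
    and skew: "\<And>c d. (\<Sum>e\<in>UNIV. M e c * gg e d) + (\<Sum>e\<in>UNIV. M e d * gg c e) = 0"
  shows "(\<Sum>c\<in>UNIV. M c c) = 0"
proof -
  define A :: "real^'n^'n" where "A = (\<chi> i j. gg i j)"
  define B :: "real^'n^'n" where "B = (\<chi> i j. M i j)"
  have "invertible A" unfolding A_def using det invertible_det_nz by blast
  then obtain A' where A': "A ** A' = mat 1" "A' ** A = mat 1" unfolding invertible_def by blast
  have AB: "A ** B = - (transpose B ** A)"
  proof -
    have "(A ** B) $ c $ d = - ((transpose B ** A) $ c $ d)" for c d
    proof -
      have AB_entry: "(A ** B) $ c $ d = (\<Sum>e\<in>UNIV. M e d * gg c e)"
        unfolding A_def B_def matrix_matrix_mult_def by (simp add: mult.commute)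
      have BA_entry: "(transpose B ** A) $ c $ d = (\<Sum>e\<in>UNIV. M e c * gg e d)"
        unfolding A_def B_def matrix_matrix_mult_def transpose_def by simp
      show ?thesis unfolding AB_entry BA_entry using skew[of c d] by linarith
    qed
    then show ?thesis by (simp add: vec_eq_iff)
  qed
  have "trace B = trace ((A' ** A) ** B)" using A' by simp
  also have "\<dots> = trace (A' ** (A ** B))" by (simp add: matrix_mul_assoc)
  also have "\<dots> = - trace (A' ** (transpose B ** A))"
    unfolding AB by (simp add: matrix_matrix_mult_def trace_def sum_negf)
  also have "\<dots> = - trace ((A' ** transpose B) ** A)" by (simp add: matrix_mul_assoc)
  also have "\<dots> = - trace (A ** (A' ** transpose B))" using trace_mul_sym[of "A' ** transpose B" A] by simp
  also have "\<dots> = - trace (transpose B)" using A' by (simp add: matrix_mul_assoc)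
  also have "\<dots> = - trace B" by (simp add: trace_def transpose_def)
  finally have "trace B = 0" by simp
  then show ?thesis by (simp add: trace_def B_def)
qed

lemma double_sum_eq_zero_if_antisym:
  fixes X :: "'a \<Rightarrow> 'a \<Rightarrow> real"
  assumes "\<And>e f. X e f + X f e = 0"
  shows "(\<Sum>e\<in>A. \<Sum>f\<in>A. X e f) = 0"
proof -
  have "(\<Sum>e\<in>A. \<Sum>f\<in>A. X e f) = (\<Sum>e\<in>A. \<Sum>f\<in>A. X f e)" by (rule sum.swap)
  also have "\<dots> = - (\<Sum>e\<in>A. \<Sum>f\<in>A. X e f)"
  proof -
    have "X f e = - X e f" for e f using assms[of e f] by linarith
    then show ?thesis unfolding sum_negf[symmetric] by (intro sum.cong refl)
  qed
  finally show ?thesis by simp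
qed

text \<open>The algebraic core of \<open>R\<^sub>a\<^sub>b\<^sub>c\<^sub>d = -R\<^sub>a\<^sub>b\<^sub>d\<^sub>c\<close> for a metric connection: \<open>dg\<close> and \<open>D\<close>
  stand for the first derivatives of the metric and of the Christoffel symbols, and \<open>E\<close> says that
  the second derivatives of the metric commute.\<close>
lemma curv_lowered_skew_algebraic:
  fixes \<Gamma> :: "'n::finite \<Rightarrow> 'n \<Rightarrow> 'n \<Rightarrow> real" and D :: "'n \<Rightarrow> 'n \<Rightarrow> 'n \<Rightarrow> 'n \<Rightarrow> real"
    and gg :: "'n \<Rightarrow> 'n \<Rightarrow> real" and dg :: "'n \<Rightarrow> 'n \<Rightarrow> 'n \<Rightarrow> real"
  assumes gsym: "\<And>i j. gg i j = gg j i"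
    and dg: "\<And>a e d. dg a e d = (\<Sum>f\<in>UNIV. \<Gamma> a e f * gg f d) + (\<Sum>f\<in>UNIV. \<Gamma> a d f * gg e f)"
    and E: "(\<Sum>e\<in>UNIV. \<Gamma> b c e * dg a e d + D a b c e * gg e d) + (\<Sum>e\<in>UNIV. \<Gamma> b d e * dg a c e + D a b d e * gg c e)
          = (\<Sum>e\<in>UNIV. \<Gamma> a c e * dg b e d + D b a c e * gg e d) + (\<Sum>e\<in>UNIV. \<Gamma> a d e * dg b c e + D b a d e * gg c e)"
  shows "(\<Sum>e\<in>UNIV. (D a b c e - D b a c e + (\<Sum>f\<in>UNIV. \<Gamma> a f e * \<Gamma> b c f) - (\<Sum>f\<in>UNIV. \<Gamma> b f e * \<Gamma> a c f)) * gg e d)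
       + (\<Sum>e\<in>UNIV. (D a b d e - D b a d e + (\<Sum>f\<in>UNIV. \<Gamma> a f e * \<Gamma> b d f) - (\<Sum>f\<in>UNIV. \<Gamma> b f e * \<Gamma> a d f)) * gg c e) = 0"
proof -
  have expand1: "(\<Sum>e\<in>UNIV. \<Gamma> b c e * dg a e d + D a b c e * gg e d)
     = (\<Sum>e\<in>UNIV. \<Sum>f\<in>UNIV. \<Gamma> b c e * \<Gamma> a e f * gg f d) + (\<Sum>e\<in>UNIV. \<Sum>f\<in>UNIV. \<Gamma> b c e * \<Gamma> a d f * gg e f)
       + (\<Sum>e\<in>UNIV. D a b c e * gg e d)" for a b
    by (simp add: dg distrib_left sum.distrib sum_distrib_left mult.assoc)
  have expand2: "(\<Sum>e\<in>UNIV. \<Gamma> b d e * dg a c e + D a b d e * gg c e)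
     = (\<Sum>e\<in>UNIV. \<Sum>f\<in>UNIV. \<Gamma> b d e * \<Gamma> a c f * gg f e) + (\<Sum>e\<in>UNIV. \<Sum>f\<in>UNIV. \<Gamma> b d e * \<Gamma> a e f * gg c f)
       + (\<Sum>e\<in>UNIV. D a b d e * gg c e)" for a b
    by (simp add: dg distrib_left sum.distrib sum_distrib_left mult.assoc)
  have curv_term: "(\<Sum>e\<in>UNIV. (D a b c e - D b a c e + (\<Sum>f\<in>UNIV. \<Gamma> a f e * \<Gamma> b c f) - (\<Sum>f\<in>UNIV. \<Gamma> b f e * \<Gamma> a c f)) * gg e d)
     = (\<Sum>e\<in>UNIV. D a b c e * gg e d) - (\<Sum>e\<in>UNIV. D b a c e * gg e d)
       + (\<Sum>e\<in>UNIV. \<Sum>f\<in>UNIV. \<Gamma> a f e * \<Gamma> b c f * gg e d) - (\<Sum>e\<in>UNIV. \<Sum>f\<in>UNIV. \<Gamma> b f e * \<Gamma> a c f * gg e d)"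
    for c d by (simp add: left_diff_distrib distrib_right sum.distrib sum_subtractf sum_distrib_right)
  have curv_term': "(\<Sum>e\<in>UNIV. (D a b d e - D b a d e + (\<Sum>f\<in>UNIV. \<Gamma> a f e * \<Gamma> b d f) - (\<Sum>f\<in>UNIV. \<Gamma> b f e * \<Gamma> a d f)) * gg c e)
     = (\<Sum>e\<in>UNIV. D a b d e * gg c e) - (\<Sum>e\<in>UNIV. D b a d e * gg c e)
       + (\<Sum>e\<in>UNIV. \<Sum>f\<in>UNIV. \<Gamma> a f e * \<Gamma> b d f * gg c e) - (\<Sum>e\<in>UNIV. \<Sum>f\<in>UNIV. \<Gamma> b f e * \<Gamma> a d f * gg c e)"
    by (simp add: left_diff_distrib distrib_right sum.distrib sum_subtractf sum_distrib_right)
  \<comment> \<open>after renaming \<open>e \<leftrightarrow> f\<close> the quadratic terms of both sides cancel pairwise\<close>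
  define X where "X e f = (\<Gamma> a f e * \<Gamma> b c f * gg e d - \<Gamma> b f e * \<Gamma> a c f * gg e d
       + \<Gamma> a f e * \<Gamma> b d f * gg c e - \<Gamma> b f e * \<Gamma> a d f * gg c e)
     - (\<Gamma> b c e * \<Gamma> a e f * gg f d + \<Gamma> b c e * \<Gamma> a d f * gg e f
        - \<Gamma> a c e * \<Gamma> b e f * gg f d - \<Gamma> a c e * \<Gamma> b d f * gg e f
        + \<Gamma> b d e * \<Gamma> a c f * gg f e + \<Gamma> b d e * \<Gamma> a e f * gg c f
        - \<Gamma> a d e * \<Gamma> b c f * gg f e - \<Gamma> a d e * \<Gamma> b e f * gg c f)" for e f
  have "X e f + X f e = 0" for e f
    unfolding X_def using gsym[of e f] by (simp add: algebra_simps)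
  then have "(\<Sum>e\<in>UNIV. \<Sum>f\<in>UNIV. X e f) = 0" by (rule double_sum_eq_zero_if_antisym)
  then show ?thesis
    using E unfolding curv_term curv_term' expand1 expand2 X_def
    by (simp only: sum.distrib sum_subtractf)
qed

lemma levi_civita_pd_metric:
  assumes "levi_civita U g G" "y \<in> U"
  shows "pd a (\<lambda>y. g y b c) y = (\<Sum>d\<in>UNIV. G y a b d * g y d c) + (\<Sum>d\<in>UNIV. G y a c d * g y b d)"
  using assms unfolding levi_civita_def by (auto simp: algebra_simps)

lemma levi_civita_pd_pd_metric:
  assumes U: "open U" "x \<in> U" and LC: "levi_civita U g G"
    and g: "\<And>a b. smooth_fun U (\<lambda>y. g y a b)" and dG: "\<And>a b c. (\<lambda>y. G y a b c) differentiable (at x)"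
  shows "pd a (pd b (\<lambda>y. g y c d)) x
       = (\<Sum>e\<in>UNIV. G x b c e * pd a (\<lambda>y. g y e d) x + pd a (\<lambda>y. G y b c e) x * g x e d)
       + (\<Sum>e\<in>UNIV. G x b d e * pd a (\<lambda>y. g y c e) x + pd a (\<lambda>y. G y b d e) x * g x c e)"
proof -
  have gd: "(\<lambda>y. g y a b) differentiable (at x)" for a b using smooth_fun_differentiable[OF g U(2)] .
  have "pd a (pd b (\<lambda>y. g y c d)) x
      = pd a (\<lambda>y. (\<Sum>e\<in>UNIV. G y b c e * g y e d) + (\<Sum>e\<in>UNIV. G y b d e * g y c e)) x"
    by (rule pd_transform_within_open[OF U]) (use levi_civita_pd_metric[OF LC] in auto)
  then show ?thesis by (simp add: pd_add pd_sum pd_mult dG gd)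
qed

theorem levi_civita_curv_skew:
  assumes U: "open U" "x \<in> U" and g: "pseudo_metric U g" and LC: "levi_civita U g G"
    and dG: "\<And>a b c. (\<lambda>y. G y a b c) differentiable (at x)"
  shows "(\<Sum>e\<in>UNIV. curv G x a b e c * g x e d) + (\<Sum>e\<in>UNIV. curv G x a b e d * g x c e) = 0"
proof -
  have gs: "\<And>a b. smooth_fun U (\<lambda>y. g y a b)" and gsym: "\<And>a b. g x a b = g x b a"
    using g U unfolding pseudo_metric_def by auto
  have "pd a (pd b (\<lambda>y. g y c d)) x = pd b (pd a (\<lambda>y. g y c d)) x"
    by (rule pd_commute[OF U gs])
  then have "(\<Sum>e\<in>UNIV. G x b c e * pd a (\<lambda>y. g y e d) x + pd a (\<lambda>y. G y b c e) x * g x e d)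
       + (\<Sum>e\<in>UNIV. G x b d e * pd a (\<lambda>y. g y c e) x + pd a (\<lambda>y. G y b d e) x * g x c e)
       = (\<Sum>e\<in>UNIV. G x a c e * pd b (\<lambda>y. g y e d) x + pd b (\<lambda>y. G y a c e) x * g x e d)
       + (\<Sum>e\<in>UNIV. G x a d e * pd b (\<lambda>y. g y c e) x + pd b (\<lambda>y. G y a d e) x * g x c e)"
    unfolding levi_civita_pd_pd_metric[OF U LC gs dG] .
  from curv_lowered_skew_algebraic[OF gsym levi_civita_pd_metric[OF LC U(2)] this]
  show ?thesis unfolding curv_def by simp
qed

lemma ricci_antisym_eq_curv_trace:
  assumes U: "open U" "x \<in> U" and sym: "\<And>y a b c. y \<in> U \<Longrightarrow> G y a b c = G y b a c"
  shows "ricci G x b d - ricci G x d b = - (\<Sum>c\<in>UNIV. curv G x b d c c)"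
proof -
  have Gx: "G x a b c = G x b a c" for a b c using sym U by blast
  have DGsym: "pd e (\<lambda>y. G y a b c) x = pd e (\<lambda>y. G y b a c) x" for e a b c
    by (rule pd_transform_within_open[OF U]) (use sym in auto)
  have "curv G x c b c d - curv G x c d c b = - curv G x b d c c" for c
  proof -
    have "(\<Sum>e\<in>UNIV. G x c e c * G x b d e) = (\<Sum>e\<in>UNIV. G x c e c * G x d b e)"
      "(\<Sum>e\<in>UNIV. G x b e c * G x c d e) = (\<Sum>e\<in>UNIV. G x b e c * G x d c e)"
      "(\<Sum>e\<in>UNIV. G x d e c * G x c b e) = (\<Sum>e\<in>UNIV. G x d e c * G x b c e)"
      by (simp_all add: Gx[of b d] Gx[of c d] Gx[of c b])
    then show ?thesis unfolding curv_def
      using DGsym[of c b d c] DGsym[of b c d c] DGsym[of d c b c] by linarith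
  qed
  then show ?thesis unfolding ricci_def by (simp add: sum_subtractf[symmetric] sum_negf)
qed

theorem levi_civita_ricci_sym:
  assumes U: "open U" "x \<in> U" and g: "pseudo_metric U g" and LC: "levi_civita U g G"
    and dG: "\<And>a b c. (\<lambda>y. G y a b c) differentiable (at x)"
  shows "ricci G x b d = ricci G x d b"
proof -
  have "det (\<chi> i j. g x i j) \<noteq> 0" using g U unfolding pseudo_metric_def by auto
  from skew_adjoint_trace_eq_zero[OF this levi_civita_curv_skew[OF U g LC dG]]
  have "(\<Sum>c\<in>UNIV. curv G x b d c c) = 0" .
  moreover have "\<And>y a b c. y \<in> U \<Longrightarrow> G y a b c = G y b a c" using LC unfolding levi_civita_def by blast
  ultimately show ?thesis using ricci_antisym_eq_curv_trace[OF U, of G b d] by simp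
qed

lemma pd_cov_vec:
  assumes U: "open U" "x \<in> U" and k: "\<And>c. smooth_fun U (\<lambda>y. k y $ c)"
    and dG: "\<And>a b c. (\<lambda>y. G y a b c) differentiable (at x)"
  shows "pd a (\<lambda>y. cov_vec G k y b c) x = pd a (pd b (\<lambda>y. k y $ c)) x
      + (\<Sum>d\<in>UNIV. G x b d c * pd a (\<lambda>y. k y $ d) x) + (\<Sum>d\<in>UNIV. pd a (\<lambda>y. G y b d c) x * k x $ d)"
proof -
  have "(\<lambda>y. k y $ c) differentiable (at x)" "pd b (\<lambda>y. k y $ c) differentiable (at x)" for b c
    using smooth_fun_differentiable[OF k U(2)] smooth_fun_differentiable[OF smooth_fun_pd[OF k] U(2)] .
  then have "pd a (\<lambda>y. cov_vec G k y b c) x = pd a (pd b (\<lambda>y. k y $ c)) x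
      + (\<Sum>d\<in>UNIV. G x b d c * pd a (\<lambda>y. k y $ d) x + pd a (\<lambda>y. G y b d c) x * k x $ d)"
    unfolding cov_vec_def by (simp add: pd_add pd_sum pd_mult dG)
  then show ?thesis by (simp add: sum.distrib)
qed

theorem ricci_identity:
  assumes U: "open U" "x \<in> U" and sym: "\<And>a b c. G x a b c = G x b a c"
    and k: "\<And>c. smooth_fun U (\<lambda>y. k y $ c)" and dG: "\<And>a b c. (\<lambda>y. G y a b c) differentiable (at x)"
  shows "cov2_vec G k x a b c - cov2_vec G k x b a c = (\<Sum>d\<in>UNIV. curv G x a b c d * k x $ d)"
proof -
  have quad: "(\<Sum>e\<in>UNIV. G x a e c * cov_vec G k x b e) = (\<Sum>e\<in>UNIV. G x a e c * pd b (\<lambda>y. k y $ e) x)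
      + (\<Sum>d\<in>UNIV. (\<Sum>e\<in>UNIV. G x a e c * G x b d e) * k x $ d)" for a b
  proof -
    have "(\<Sum>e\<in>UNIV. G x a e c * (\<Sum>d\<in>UNIV. G x b d e * k x $ d))
        = (\<Sum>e\<in>UNIV. \<Sum>d\<in>UNIV. G x a e c * G x b d e * k x $ d)"
      by (simp add: sum_distrib_left mult.assoc)
    also have "\<dots> = (\<Sum>d\<in>UNIV. (\<Sum>e\<in>UNIV. G x a e c * G x b d e) * k x $ d)"
      by (subst sum.swap) (simp add: sum_distrib_right)
    finally show ?thesis unfolding cov_vec_def by (simp add: distrib_left sum.distrib)
  qed
  have "pd a (pd b (\<lambda>y. k y $ c)) x = pd b (pd a (\<lambda>y. k y $ c)) x" by (rule pd_commute[OF U k])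
  moreover have "(\<Sum>e\<in>UNIV. G x a b e * cov_vec G k x e c) = (\<Sum>e\<in>UNIV. G x b a e * cov_vec G k x e c)"
    by (simp add: sym[of a b])
  moreover have "(\<Sum>d\<in>UNIV. curv G x a b c d * k x $ d) = (\<Sum>d\<in>UNIV. pd a (\<lambda>y. G y b d c) x * k x $ d)
        - (\<Sum>d\<in>UNIV. pd b (\<lambda>y. G y a d c) x * k x $ d)
        + (\<Sum>d\<in>UNIV. (\<Sum>e\<in>UNIV. G x a e c * G x b d e) * k x $ d)
        - (\<Sum>d\<in>UNIV. (\<Sum>e\<in>UNIV. G x b e c * G x a d e) * k x $ d)"
    unfolding curv_def by (simp add: left_diff_distrib distrib_right sum.distrib sum_subtractf)
  ultimately show ?thesis
    unfolding cov2_vec_def pd_cov_vec[OF U k dG] quad by linarith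
qed

lemma sasaki_curv_k:
  assumes U: "open U" "x \<in> U" and sas: "sasaki U g k G"
    and dG: "\<And>a b c. (\<lambda>y. G y a b c) differentiable (at x)"
  shows "(\<Sum>d\<in>UNIV. curv G x a b c d * k x $ d)
       = kdelta c a * (\<Sum>d\<in>UNIV. g x b d * k x $ d) - kdelta c b * (\<Sum>d\<in>UNIV. g x a d * k x $ d)"
proof -
  have sym: "\<And>a b c. G x a b c = G x b a c" and k: "\<And>c. smooth_fun U (\<lambda>y. k y $ c)"
    and gsym: "g x a b = g x b a"
    and cov2: "\<And>a b c. cov2_vec G k x a b c = - g x a b * k x $ c + kdelta c a * (\<Sum>d\<in>UNIV. g x b d * k x $ d)"
    using sas U unfolding sasaki_def levi_civita_def pseudo_metric_def by auto
  have "cov2_vec G k x a b c - cov2_vec G k x b a c = (\<Sum>d\<in>UNIV. curv G x a b c d * k x $ d)"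
    by (rule ricci_identity[where G = G and k = k, OF U sym k dG])
  then show ?thesis unfolding cov2 gsym by simp
qed

lemma sasaki_schouten_k:
  fixes G :: "'n::finite christoffel"
  assumes U: "open U" "x \<in> U" and sas: "sasaki U g k G"
    and dG: "\<And>a b c. (\<lambda>y. G y a b c) differentiable (at x)" and card: "CARD('n) \<ge> 2"
  shows "(\<Sum>d\<in>UNIV. schouten G x b d * k x $ d) = (\<Sum>d\<in>UNIV. g x b d * k x $ d)"
proof -
  define kb where "kb b = (\<Sum>d\<in>UNIV. g x b d * k x $ d)" for b
  define N where "N = real CARD('n)"
  have g: "pseudo_metric U g" and LC: "levi_civita U g G" using sas unfolding sasaki_def by auto
  have ric_k: "(\<Sum>d\<in>UNIV. ricci G x b d * k x $ d) = (N - 1) * kb b" for b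
  proof -
    have "(\<Sum>d\<in>UNIV. ricci G x b d * k x $ d) = (\<Sum>c\<in>UNIV. \<Sum>d\<in>UNIV. curv G x c b c d * k x $ d)"
      unfolding ricci_def by (subst sum.swap) (simp add: sum_distrib_right)
    also have "\<dots> = (\<Sum>c\<in>UNIV. kdelta c c * kb b - kdelta c b * kb c)"
      unfolding sasaki_curv_k[OF U sas dG] kb_def ..
    also have "\<dots> = N * kb b - kb b"
      by (simp add: sum_subtractf kdelta_def N_def if_zero_arith cong: if_cong)
    finally show ?thesis by (simp add: algebra_simps)
  qed
  have ric_k': "(\<Sum>d\<in>UNIV. ricci G x d b * k x $ d) = (N - 1) * kb b" for b
    using ric_k[of b] levi_civita_ricci_sym[OF U g LC dG, of b] by simp
  have "(N - 1) * (N - 1 + 2) \<noteq> 0" using card by (simp add: N_def)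
  have "(\<Sum>d\<in>UNIV. schouten G x b d * k x $ d)
      = (\<Sum>d\<in>UNIV. (N - 1 + 1) * (ricci G x b d * k x $ d) + ricci G x d b * k x $ d)
        / ((N - 1) * (N - 1 + 2))"
    unfolding schouten_def Let_def N_def[symmetric] sum_divide_distrib
    by (rule sum.cong) (simp_all add: algebra_simps)
  also have "\<dots> = ((N - 1 + 1) * ((N - 1) * kb b) + (N - 1) * kb b) / ((N - 1) * (N - 1 + 2))"
    by (simp add: sum.distrib sum_distrib_left[symmetric] ric_k ric_k')
  also have "\<dots> = kb b" using \<open>(N - 1) * (N - 1 + 2) \<noteq> 0\<close> by (simp add: field_simps)
  finally show ?thesis unfolding kb_def .
qed

theorem sasaki_proj_weyl_k:
  fixes G :: "'n::finite christoffel"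
  assumes U: "open U" "x \<in> U" and sas: "sasaki U g k G"
    and dG: "\<And>a b c. (\<lambda>y. G y a b c) differentiable (at x)" and card: "CARD('n) \<ge> 2"
  shows "(\<Sum>d\<in>UNIV. proj_weyl G x a b c d * k x $ d) = 0"
proof -
  have g: "pseudo_metric U g" and LC: "levi_civita U g G" using sas unfolding sasaki_def by auto
  have "schouten G x a b = schouten G x b a"
    unfolding schouten_def Let_def using levi_civita_ricci_sym[OF U g LC dG, of a b] by simp
  then have "(\<Sum>d\<in>UNIV. proj_weyl G x a b c d * k x $ d)
      = (\<Sum>d\<in>UNIV. curv G x a b c d * k x $ d)
        - (kdelta c a * (\<Sum>d\<in>UNIV. schouten G x b d * k x $ d)
           - kdelta c b * (\<Sum>d\<in>UNIV. schouten G x a d * k x $ d))"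
    unfolding proj_weyl_def
    by (simp add: left_diff_distrib right_diff_distrib distrib_right sum.distrib sum_subtractf
        sum_distrib_left mult.assoc)
  then show ?thesis unfolding sasaki_curv_k[OF U sas dG] sasaki_schouten_k[OF U sas dG card] by simp
qed

lemma det_nonzero_imp_row_nonzero:
  fixes A :: "'n::finite \<Rightarrow> 'n \<Rightarrow> real"
  assumes "det (\<chi> i j. A i j) \<noteq> 0"
  shows "\<exists>c. A a c \<noteq> 0"
proof (rule ccontr)
  assume "\<not> (\<exists>c. A a c \<noteq> 0)"
  then have "row a (\<chi> i j. A i j) = 0" by (simp add: row_def vec_eq_iff)
  then show False using assms det_zero_row(1) by blast
qed

lemma levi_civita_shift_eq:
  fixes G G' :: "'n::finite christoffel"
  assumes g: "pseudo_metric U g" and LC: "levi_civita U g G'" and y: "y \<in> U"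
    and shift: "\<And>a b c. G' y a b c = G y a b c + kdelta c a * u b + kdelta c b * u a"
  shows "2 * u a * g y a c
       = pd a (\<lambda>y. g y a c) y - pd c (\<lambda>y. g y a a) y / 2 - (\<Sum>d\<in>UNIV. G y a a d * g y d c)"
proof -
  have "(\<Sum>d\<in>UNIV. G' y a a d * g y d c) = (\<Sum>d\<in>UNIV. G y a a d * g y d c) + 2 * u a * g y a c"
    unfolding shift by (simp only: distrib_right sum.distrib) (simp add: kdelta_def if_zero_arith cong: if_cong)
  moreover have "pd c (\<lambda>y. g y a a) y = 2 * (\<Sum>d\<in>UNIV. G' y c a d * g y a d)"
    using levi_civita_pd_metric[OF LC y, of c a a] g y unfolding pseudo_metric_def
    by (simp add: mult.commute)
  moreover have "G' y c a d = G' y a c d" for d using LC y unfolding levi_civita_def by blast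
  ultimately show ?thesis using levi_civita_pd_metric[OF LC y, of a a c] by simp
qed

text \<open>The Levi-Civita connection is not assumed smooth. By the previous lemma \<open>\<Upsilon>\<^sub>a\<close>
  is a quotient of smooth functions near \<open>x\<close>, for any \<open>c\<close> with \<open>g\<^sub>a\<^sub>c(x) \<noteq> 0\<close>.\<close>
lemma levi_civita_shift_differentiable:
  fixes G G' :: "'n::finite christoffel"
  assumes U: "open U" "x \<in> U" and g: "pseudo_metric U g" and LC: "levi_civita U g G'"
    and G: "torsion_free_conn U G"
    and shift: "\<And>y a b c. y \<in> U \<Longrightarrow> G' y a b c = G y a b c + kdelta c a * u y b + kdelta c b * u y a"
  shows "(\<lambda>y. u y a) differentiable (at x)"
proof -
  have gs: "\<And>a b. smooth_fun U (\<lambda>y. g y a b)" and "det (\<chi> i j. g x i j) \<noteq> 0"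
    using g U unfolding pseudo_metric_def by auto
  then obtain c where c: "g x a c \<noteq> 0" using det_nonzero_imp_row_nonzero by blast
  obtain \<epsilon> where \<epsilon>: "\<epsilon> > 0" "\<And>y. dist x y < \<epsilon> \<Longrightarrow> g y a c \<noteq> 0"
    using continuous_at_avoid[OF smooth_fun_continuous[OF gs U(2)] c] by blast
  define V where "V = ball x \<epsilon> \<inter> U"
  have V: "open V" "x \<in> V" using U \<epsilon> by (auto simp: V_def)
  define K where "K y = pd a (\<lambda>y. g y a c) y - pd c (\<lambda>y. g y a a) y / 2
     - (\<Sum>d\<in>UNIV. G y a a d * g y d c)" for y
  have "u y a = K y / (2 * g y a c)" if "y \<in> V" for y
  proof -
    have y: "y \<in> U" "g y a c \<noteq> 0" using that \<epsilon>(2) by (auto simp: V_def)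
    with levi_civita_shift_eq[where G = G and u = "u y" and a = a and c = c, OF g LC y(1) shift[OF y(1)]]
    show ?thesis unfolding K_def by (simp add: field_simps)
  qed
  moreover have "(\<lambda>y. K y / (2 * g y a c)) differentiable (at x)"
  proof -
    have dg: "(\<lambda>y. g y i j) differentiable (at x)" for i j
      using smooth_fun_differentiable[OF gs U(2)] .
    have dpg: "pd l (\<lambda>y. g y i j) differentiable (at x)" for l i j
      using smooth_fun_differentiable[OF smooth_fun_pd[OF gs] U(2)] .
    have dG: "(\<lambda>y. G y i j l) differentiable (at x)" for i j l
      using G U smooth_fun_differentiable unfolding torsion_free_conn_def by blast
    have "(\<lambda>y. \<Sum>d\<in>UNIV. G y a a d * g y d c) differentiable (at x)"
      by (rule differentiable_sum) (auto intro: differentiable_mult dg dG)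
    moreover have "(\<lambda>y. pd c (\<lambda>y. g y a a) y / 2) differentiable (at x)"
      by (rule differentiable_divide[OF dpg]) simp_all
    ultimately have Kd: "K differentiable (at x)"
      unfolding K_def[abs_def] by (intro differentiable_diff dpg)
    have "(\<lambda>y. 2 * g y a c) differentiable (at x)"
      by (rule differentiable_mult[OF differentiable_const dg])
    moreover have "2 * g x a c \<noteq> 0" using c by simp
    ultimately show ?thesis by (rule differentiable_divide[OF Kd])
  qed
  ultimately show ?thesis by (rule differentiable_transform_within_open[OF V])
qed

lemma christoffel_shift_differentiable:
  fixes G G' :: "'n::finite christoffel"
  assumes U: "open U" "x \<in> U" and G: "torsion_free_conn U G"
    and shift: "\<And>y a b c. y \<in> U \<Longrightarrow> G' y a b c = G y a b c + kdelta c a * u y b + kdelta c b * u y a"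
    and u: "\<And>b. (\<lambda>y. u y b) differentiable (at x)"
  shows "(\<lambda>y. G' y a b c) differentiable (at x)"
proof (rule differentiable_transform_within_open[OF U shift])
  have "(\<lambda>y. G y a b c) differentiable (at x)"
    using G U smooth_fun_differentiable unfolding torsion_free_conn_def by blast
  then show "(\<lambda>y. G y a b c + kdelta c a * u y b + kdelta c b * u y a) differentiable (at x)"
    using u by (intro differentiable_add differentiable_mult differentiable_const)
qed

theorem corollary3p4:
  fixes U :: "(real^'n::finite) set" and G :: "'n christoffel" and x :: "real^'n"
  assumes "CARD('n) \<ge> 2"
    and "open U"
    and "torsion_free_conn U G"
    and "x \<in> U"
    and "\<forall>\<xi> :: real^'n. (\<forall>a b c. (\<Sum>d\<in>UNIV. proj_weyl G x a b c d * \<xi> $ d) = 0) \<longrightarrow> \<xi> = 0"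
  shows "\<not> (\<exists>g k G'. sasaki U g k G' \<and> proj_equiv U G G')"
proof
  assume "\<exists>g k G'. sasaki U g k G' \<and> proj_equiv U G G'"
  then obtain g k G' where sas: "sasaki U g k G'" and pe: "proj_equiv U G G'" by blast
  have g: "pseudo_metric U g" and LC: "levi_civita U g G'" using sas unfolding sasaki_def by auto
  then have "\<And>y a b c. y \<in> U \<Longrightarrow> G' y a b c = G' y b a c" unfolding levi_civita_def by blast
  then have shift: "\<And>y a b c. y \<in> U \<Longrightarrow>
      G' y a b c = G y a b c + kdelta c a * proj_shift G G' y b + kdelta c b * proj_shift G G' y a"
    using proj_equiv_christoffel_eq[OF assms(2) _ assms(3) _ pe] by blast
  have shift_diff: "\<And>b. (\<lambda>y. proj_shift G G' y b) differentiable (at x)"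
    using levi_civita_shift_differentiable[OF assms(2,4) g LC assms(3) shift] .
  have "(\<lambda>y. G' y a b c) differentiable (at x)" for a b c
    using christoffel_shift_differentiable[OF assms(2,4,3) shift shift_diff] .
  then have "(\<Sum>d\<in>UNIV. proj_weyl G x a b c d * k x $ d) = 0" for a b c
    using sasaki_proj_weyl_k[OF assms(2,4) sas _ assms(1)]
      proj_weyl_eq_of_shift[OF assms(2,4,3) shift shift_diff assms(1)] by simp
  then have "k x = 0" using assms(5) by blast
  moreover have "(\<Sum>a\<in>UNIV. \<Sum>b\<in>UNIV. g x a b * k x $ a * k x $ b) = 1"
    using sas assms(4) unfolding sasaki_def by auto
  ultimately show False by simp
qed

end
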